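(* Let $N=(S,T,F,M_0,\ell)$ be a Petri net and $N'=(S',T',F',M'_0,\ell')$ a plain Petri net with $S'\subseteq S$ and $M'_0=M_0\restriction S'$. Suppose there exist sets $T_+\subseteq T$, $T_-\subseteq T$ and a class $NF\subseteq\mathbb Z^T$ such that: (1) $F\restriction(S\cup T_+)$ is acyclic; (2) $F\restriction(S\cup T_-)$ is acyclic; (3) for every $t\in T$ with $\ell(t)\ne\tau$ there is $t'\in T'$ with $\ell'(t')=\ell(t)$ such that ${}^\bullet t'\le{}^*t$ and there is a finite $G\in\mathbb N^T$ with $\ell(G)\equiv\emptyset$ and $[\![t']\!]=[\![t+G]\!]$, where ${}^*t$ is the multiset of faithful origins of $t$ w.r.t. $T_+$ and $S'\cup\{s\in S\mid M_0(s)>0\}$; (4) there is a function $f:T\to\mathbb N$ with $f(t)>0$ for all $t$, extended to finite signed multisets by $f(G)=\sum_tG(t)f(t)$, such that for each finite $G\in\mathbb Z^T$ with $\ell(G)\equiv\emptyset$ there is a finite $H\in NF$ with $\ell(H)\equiv\emptyset$, $[\![H]\!]=[\![G]\!]$ and $f(H)=f(G)$; (5) for every $M'\in\mathbb N^{S'}$, $U'\in\mathbb N^{T'}$ and $U\in\mathbb N^T$ with $\ell(U)=\ell'(U')$ and $M'+{}^\bullet U'\in[M'_0\rangle_{N'}$ there is a finite $H_{M',U}\in\mathbb N^{T_+}$ with $\ell(H_{M',U})\equiv\emptyset$ such that for each finite $H\in NF$ with $M:=M'+{}^\bullet U'+(M_0-M'_0)+[\![H]\!]-{}^\bullet U\in\mathbb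 N^S$ and $M+{}^\bullet U\in[M_0\rangle_N$: (a) $M_{M',U}:=M'+{}^\bullet U'+(M_0-M'_0)+[\![H_{M',U}]\!]-{}^\bullet U\in\mathbb N^S$; (b) if $M'\xrightarrow{a}$ in $N'$ with $a\in\mathrm{Act}$ then $M_{M',U}\xrightarrow{a}$ in $N$; (c) $H\le H_{M',U}$; (d) if $H(u)<0$ then $u\in T_-$; (e) if $H(u)<0$ and $H(t)>0$ then ${}^\bullet u\cap{}^\bullet t=\emptyset$; (f) if $H(u)<0$ and $(M+{}^\bullet U)[t\rangle$ with $\ell(t)\ne\tau$ then ${}^\bullet u\cap{}^\bullet t=\emptyset$; (g) if $(M+{}^\bullet U)[\{t\}+\{u\}\rangle$ and $t',u'\in T'$ with $\ell'(t')=\ell(t)$ and $\ell'(u')=\ell(u)$, then ${}^\bullet t'\cap{}^\bullet u'=\emptyset$. Then $N\approx^\Delta_{bSTb}N'$.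
   Context: Fix visible actions $\mathrm{Act}$ and $\tau\notin\mathrm{Act}$. A Petri net $(S,T,F,M_0,\ell)$ has disjoint $S,T$, $F:(S\times T)\cup(T\times S)\to\mathbb N$, $M_0\in\mathbb N^S$, $\ell:T\to\mathrm{Act}\cup\{\tau\}$. A signed multiset over $X$ is a function $X\to\mathbb Z$ (a multiset if values are $\ge0$); finite if it has finitely many nonzero values; $\le$, $+$, $-$, $\cap$ (min), $\cup$ (max) are pointwise; signed multisets over different sets are identified when they agree on the common domain and are zero elsewhere (so $M'\in\mathbb N^{S'}$ is viewed as a signed multiset over $S$). ${}^\bullet x(y)=F(y,x)$, $x^\bullet(y)=F(x,y)$, extended to finite signed multisets $G$ of transitions by ${}^\bullet G=\sum_tG(t)\,{}^\bullet t$ etc., and $[\![G]\!]=G^\bullet-{}^\bullet G$. $\ell(G)=\sum_tG(t)\{\ell(t)\}$; $\ell(G)\equiv\emptyset$ means $\ell(G)(a)=0$ for every $a\in\mathrm{Act}$. For a finite nonempty multiset $G$ of transitions, $M[G\rangle M'$ iff ${}^\bullet G\le M$ and $M'=M-{}^\bullet G+G^\bullet$; $[M_0\rangle_N$ is the set of reachable markings. $M\xrightarrow{\alpha}$ iff $M[t\rangle$ for some $t$ with label $\alpha$. Plain: $\ell$ injective and never $\tau$. $F\restriction(S\cup T_+)$ acyclic means there is no nonempty path $x_0x_1\cdots x_n$ with $x_0=x_n$, all $x_i\in S\cup T_+$ and $F(x_i,x_{i+1})>0$. Faithful origins (w.r.t. $T_+\subseteq T$ and $S_+\subseteq S$): a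 path is $x_0x_1\cdots x_n$ with $F(x_i,x_{i+1})>0$, with arc weight $F(\pi)=\prod_{i<n}F(x_i,x_{i+1})$. A place $s$ is faithful iff $|\{s\}\cap S_+|+\sum_{t\in T_+}F(t,s)=1$. A path is faithful iff every $x_i$ with $0\le i<n$ is a transition in $T_+$ or a faithful place. ${}^*x\in(\mathbb N\cup\{\infty\})^{S_+}$ is given by ${}^*x(s)=\sup\{F(\pi)\mid\pi$ a faithful path from $s\in S_+$ to $x\}$ (0 if none). $\approx^\Delta_{bSTb}$: branching ST-bisimilarity with explicit divergence, i.e. existence of a relation $\mathcal B$ between ST-markings relating $(M_0,\varepsilon)$ and $(M'_0,\varepsilon)$ such that: if $\mathfrak M_1\mathcal B\mathfrak M_2$ and $\mathfrak M_1\xrightarrow{\alpha}\mathfrak M_1'$ then $\mathfrak M_2\Rightarrow\mathfrak M_2^\dagger\xrightarrow{(\alpha)}\mathfrak M_2'$ with $\mathfrak M_1\mathcal B\mathfrak M_2^\dagger$ and $\mathfrak M_1'\mathcal B\mathfrak M_2'$ ($\Rightarrow$ reflexive transitive closure of $\xrightarrow{\tau}$; $\xrightarrow{(\alpha)}$ means $\xrightarrow{\alpha}$ or, if $\alpha=\tau$, staying put), and symmetrically; and if $\mathfrak M_1\mathcal B\mathfrak M_2$ and an infinite $\tau$-sequence from $\mathfrak M_1$ has all states related to $\mathfrak M_2$ then there is an infinite $\tau$-sequence from $\mathfrak M_2$ with all pairs of states related, and symmetrically. ST-markings are $(M,U)\in\mathbb N^S\times T^*$; $(M,U)\xrightarrow{a^+}(M-{}^\bullet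 t,Ut)$ iff $\ell(t)=a\in\mathrm{Act}$, $M[t\rangle$; $(M,U)\xrightarrow{a^{-n}}(M+t^\bullet,U^{-n})$ iff the $n$-th element $t$ of $U$ has label $a$ ($U^{-n}$ removes it); $(M,U)\xrightarrow{\tau}(M',U)$ iff $M[t\rangle M'$ with $\ell(t)=\tau$. *)

theory Defs
  imports Main "HOL-Library.Extended_Nat"
begin

text \<open>Labels: \<open>Some a\<close> is the visible action a, \<open>None\<close> is tau.
  Places have type 's, transitions type 't.  \<open>pre N t s\<close> = F(s,t), \<open>post N t s\<close> = F(t,s).\<close>

record ('s, 't, 'a) pnet =
  places :: "'s set"
  trans  :: "'t set"
  pre    :: "'t \<Rightarrow> 's \<Rightarrow> nat"
  post   :: "'t \<Rightarrow> 's \<Rightarrow> nat"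
  init   :: "'s \<Rightarrow> nat"
  lab    :: "'t \<Rightarrow> 'a option"

definition wf_net :: "('s, 't, 'a) pnet \<Rightarrow> bool" where
  "wf_net N \<longleftrightarrow>
     (\<forall>t s. (pre N t s \<noteq> 0 \<or> post N t s \<noteq> 0) \<longrightarrow> t \<in> trans N \<and> s \<in> places N) \<and>
     (\<forall>s. init N s \<noteq> 0 \<longrightarrow> s \<in> places N)"

definition plain :: "('s, 't, 'a) pnet \<Rightarrow> bool" where
  "plain N \<longleftrightarrow> inj_on (lab N) (trans N) \<and> (\<forall>t \<in> trans N. lab N t \<noteq> None)"

definition supp :: "('x \<Rightarrow> int) \<Rightarrow> 'x set" where
  "supp G = {x. G x \<noteq> 0}"

definition fin :: "('x \<Rightarrow> int) \<Rightarrow> bool" where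
  "fin G \<longleftrightarrow> finite (supp G)"

text \<open>\<open>G \<in> \<int>^X\<close>: zero outside X; \<open>G \<in> \<nat>^X\<close>: additionally nonnegative.\<close>
definition signed_over :: "('x \<Rightarrow> int) \<Rightarrow> 'x set \<Rightarrow> bool" where
  "signed_over G X \<longleftrightarrow> supp G \<subseteq> X"

definition mset_over :: "('x \<Rightarrow> int) \<Rightarrow> 'x set \<Rightarrow> bool" where
  "mset_over G X \<longleftrightarrow> supp G \<subseteq> X \<and> (\<forall>x. 0 \<le> G x)"

definition one :: "'x \<Rightarrow> 'x \<Rightarrow> int" where
  "one t = (\<lambda>x. if x = t then 1 else 0)"

definition pre_ms :: "('s, 't, 'a) pnet \<Rightarrow> ('t \<Rightarrow> int) \<Rightarrow> 's \<Rightarrow> int" where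
  "pre_ms N G = (\<lambda>s. \<Sum>t\<in>supp G. G t * int (pre N t s))"

definition post_ms :: "('s, 't, 'a) pnet \<Rightarrow> ('t \<Rightarrow> int) \<Rightarrow> 's \<Rightarrow> int" where
  "post_ms N G = (\<lambda>s. \<Sum>t\<in>supp G. G t * int (post N t s))"

definition eff :: "('s, 't, 'a) pnet \<Rightarrow> ('t \<Rightarrow> int) \<Rightarrow> 's \<Rightarrow> int" where
  "eff N G = (\<lambda>s. post_ms N G s - pre_ms N G s)"

definition labm :: "('s, 't, 'a) pnet \<Rightarrow> ('t \<Rightarrow> int) \<Rightarrow> 'a option \<Rightarrow> int" where
  "labm N G = (\<lambda>\<alpha>. \<Sum>t\<in>{t \<in> supp G. lab N t = \<alpha>}. G t)"

definition lab_empty :: "('s, 't, 'a) pnet \<Rightarrow> ('t \<Rightarrow> int) \<Rightarrow> bool" where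
  "lab_empty N G \<longleftrightarrow> (\<forall>a. labm N G (Some a) = 0)"

definition disjoint_ms :: "('s \<Rightarrow> nat) \<Rightarrow> ('s \<Rightarrow> nat) \<Rightarrow> bool" where
  "disjoint_ms A B \<longleftrightarrow> (\<forall>s. min (A s) (B s) = 0)"

definition fires :: "('s, 't, 'a) pnet \<Rightarrow> ('s \<Rightarrow> int) \<Rightarrow> ('t \<Rightarrow> int) \<Rightarrow> ('s \<Rightarrow> int) \<Rightarrow> bool" where
  "fires N M G M' \<longleftrightarrow> mset_over G (trans N) \<and> fin G \<and> supp G \<noteq> {} \<and>
     (\<forall>s. pre_ms N G s \<le> M s) \<and> M' = (\<lambda>s. M s - pre_ms N G s + post_ms N G s)"

definition enabled :: "('s, 't, 'a) pnet \<Rightarrow> ('s \<Rightarrow> int) \<Rightarrow> ('t \<Rightarrow> int) \<Rightarrow> bool" where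
  "enabled N M G \<longleftrightarrow> (\<exists>M'. fires N M G M')"

definition init_m :: "('s, 't, 'a) pnet \<Rightarrow> 's \<Rightarrow> int" where
  "init_m N = (\<lambda>s. int (init N s))"

inductive_set reach :: "('s, 't, 'a) pnet \<Rightarrow> ('s \<Rightarrow> int) set" for N where
  reach_init: "init_m N \<in> reach N"
| reach_step: "M \<in> reach N \<Longrightarrow> fires N M G M' \<Longrightarrow> M' \<in> reach N"

definition can_do :: "('s, 't, 'a) pnet \<Rightarrow> ('s \<Rightarrow> int) \<Rightarrow> 'a option \<Rightarrow> bool" where
  "can_do N M \<alpha> \<longleftrightarrow> (\<exists>t. lab N t = \<alpha> \<and> enabled N M (one t))"

datatype ('s, 't) node = P 's | Tr 't

fun arcw :: "('s, 't, 'a) pnet \<Rightarrow> ('s, 't) node \<Rightarrow> ('s, 't) node \<Rightarrow> nat" where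
  "arcw N (P s) (Tr t) = pre N t s"
| "arcw N (Tr t) (P s) = post N t s"
| "arcw N _ _ = 0"

definition flow :: "('s, 't, 'a) pnet \<Rightarrow> ('s, 't) node rel" where
  "flow N = {(x, y). 0 < arcw N x y}"

definition acyclic_on :: "('s, 't, 'a) pnet \<Rightarrow> 't set \<Rightarrow> bool" where
  "acyclic_on N X \<longleftrightarrow>
     (let V = P ` places N \<union> Tr ` X in acyclic (flow N \<inter> (V \<times> V)))"

definition faithful_place :: "('s, 't, 'a) pnet \<Rightarrow> 't set \<Rightarrow> 's set \<Rightarrow> 's \<Rightarrow> bool" where
  "faithful_place N Tp Sp s \<longleftrightarrow>
     finite {t \<in> Tp. 0 < post N t s} \<and>
     (if s \<in> Sp then 1 else 0) + (\<Sum>t\<in>{t \<in> Tp. 0 < post N t s}. post N t s) = 1"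

definition is_path :: "('s, 't, 'a) pnet \<Rightarrow> ('s, 't) node list \<Rightarrow> bool" where
  "is_path N xs \<longleftrightarrow> xs \<noteq> [] \<and> (\<forall>i < length xs - 1. 0 < arcw N (xs ! i) (xs ! Suc i))"

definition path_weight :: "('s, 't, 'a) pnet \<Rightarrow> ('s, 't) node list \<Rightarrow> nat" where
  "path_weight N xs = (\<Prod>i<length xs - 1. arcw N (xs ! i) (xs ! Suc i))"

definition faithful_path :: "('s, 't, 'a) pnet \<Rightarrow> 't set \<Rightarrow> 's set \<Rightarrow> ('s, 't) node list \<Rightarrow> bool" where
  "faithful_path N Tp Sp xs \<longleftrightarrow> is_path N xs \<and>
     (\<forall>i < length xs - 1. (case xs ! i of Tr t \<Rightarrow> t \<in> Tp | P s \<Rightarrow> faithful_place N Tp Sp s))"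

definition origins :: "('s, 't, 'a) pnet \<Rightarrow> 't set \<Rightarrow> 's set \<Rightarrow> ('s, 't) node \<Rightarrow> 's \<Rightarrow> enat" where
  "origins N Tp Sp x = (\<lambda>s. if s \<in> Sp then
      Sup {enat (path_weight N xs) | xs. faithful_path N Tp Sp xs \<and> hd xs = P s \<and> last xs = x}
    else 0)"

datatype 'a st_lab = Start 'a | Fin 'a nat | Tau

type_synonym ('s, 't) st_marking = "('s \<Rightarrow> int) \<times> 't list"

text \<open>Positions in U are counted from 0 (the n-th element is \<open>U ! n\<close>).\<close>
inductive st_step :: "('s, 't, 'a) pnet \<Rightarrow> ('s, 't) st_marking \<Rightarrow> 'a st_lab \<Rightarrow> ('s, 't) st_marking \<Rightarrow> bool"
  for N where
  st_start: "lab N t = Some a \<Longrightarrow> enabled N M (one t) \<Longrightarrow>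
     st_step N (M, U) (Start a) (\<lambda>s. M s - int (pre N t s), U @ [t])"
| st_fin: "n < length U \<Longrightarrow> lab N (U ! n) = Some a \<Longrightarrow>
     st_step N (M, U) (Fin a n) (\<lambda>s. M s + int (post N (U ! n) s), take n U @ drop (Suc n) U)"
| st_tau: "lab N t = None \<Longrightarrow> fires N M (one t) M' \<Longrightarrow> st_step N (M, U) Tau (M', U)"

definition bb_half :: "('p \<Rightarrow> 'a st_lab \<Rightarrow> 'p \<Rightarrow> bool) \<Rightarrow> ('q \<Rightarrow> 'a st_lab \<Rightarrow> 'q \<Rightarrow> bool)
    \<Rightarrow> ('p \<Rightarrow> 'q \<Rightarrow> bool) \<Rightarrow> bool" where
  "bb_half st1 st2 B \<longleftrightarrow>
    (\<forall>p q \<alpha> p'. B p q \<and> st1 p \<alpha> p' \<longrightarrow>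
       (\<exists>q1 q'. (\<lambda>x y. st2 x Tau y)\<^sup>*\<^sup>* q q1 \<and> B p q1 \<and> B p' q' \<and>
                 (st2 q1 \<alpha> q' \<or> (\<alpha> = Tau \<and> q' = q1)))) \<and>
    (\<forall>p q ps. B p q \<and> ps 0 = p \<and> (\<forall>i. st1 (ps i) Tau (ps (Suc i)) \<and> B (ps i) q) \<longrightarrow>
       (\<exists>qs. qs 0 = q \<and> (\<forall>i. st2 (qs i) Tau (qs (Suc i))) \<and> (\<forall>i j. B (ps i) (qs j))))"

definition bbisim_div :: "('p \<Rightarrow> 'a st_lab \<Rightarrow> 'p \<Rightarrow> bool) \<Rightarrow> ('q \<Rightarrow> 'a st_lab \<Rightarrow> 'q \<Rightarrow> bool)
    \<Rightarrow> ('p \<Rightarrow> 'q \<Rightarrow> bool) \<Rightarrow> bool" where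
  "bbisim_div st1 st2 B \<longleftrightarrow> bb_half st1 st2 B \<and> bb_half st2 st1 (conversep B)"

definition bSTb_div_equiv :: "('s, 't, 'a) pnet \<Rightarrow> ('s2, 't2, 'a) pnet \<Rightarrow> bool" where
  "bSTb_div_equiv N N' \<longleftrightarrow>
     (\<exists>B. B (init_m N, []) (init_m N', []) \<and> bbisim_div (st_step N) (st_step N') B)"

end

theory Submission
  imports Defs
begin

text \<open>An ST-marking \<open>(M, U)\<close> of \<open>N\<close> is related to \<open>(M', U')\<close> of \<open>N'\<close> when the
  started transitions correspond label by label and
  \<open>M = M' + \<^sup>\<bullet>U' + (M\<^sub>0 - M'\<^sub>0) + [[H]] - \<^sup>\<bullet>U\<close> for a finite label-neutral
  compensation \<open>H\<close>. A tau-step of \<open>N\<close> only changes \<open>H\<close>, and finishing a transition changes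
  it by the multiset \<open>G\<close> of hypothesis (3). Starting a visible transition \<open>t\<close> is possible
  in \<open>N'\<close> because the preset of its counterpart \<open>t'\<close> is bounded by the faithful origins of
  \<open>t\<close>, and conditions (5)(c)--(g) show that these tokens are present in \<open>M'\<close>. Conversely,
  before a visible step of \<open>N'\<close>, \<open>N\<close> fires tau-transitions realising the maximal
  compensation \<open>H\<^sub>M\<^sub>',\<^sub>U\<close> of (5), first undoing the negative part of \<open>H\<close>
  within \<open>Tm\<close> and then firing the rest within \<open>Tp\<close>, both possible by acyclicity;
  afterwards (5)(b) provides the action. Divergence of \<open>N\<close> is impossible because the
  normal forms (4) of the compensations along a tau-run grow in \<open>f\<close>-weight but stay below
  \<open>H\<^sub>M\<^sub>',\<^sub>U\<close>, and the plain net \<open>N'\<close> has no tau-steps at all.\<close>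

definition wsum :: "('t \<Rightarrow> int) \<Rightarrow> ('t \<Rightarrow> int) \<Rightarrow> int" where
  "wsum c G = (\<Sum>t\<in>supp G. G t * c t)"

lemma wsum_eq_sum_superset: "finite A \<Longrightarrow> supp G \<subseteq> A \<Longrightarrow> wsum c G = (\<Sum>t\<in>A. G t * c t)"
  unfolding wsum_def by (rule sum.mono_neutral_left) (auto simp: supp_def)

lemma supp_add_subset: "supp (\<lambda>x. G x + K x) \<subseteq> supp G \<union> supp K"
  and supp_diff_subset: "supp (\<lambda>x. G x - K x) \<subseteq> supp G \<union> supp K"
  by (auto simp: supp_def)

lemma fin_add: "fin G \<Longrightarrow> fin K \<Longrightarrow> fin (\<lambda>x. G x + K x)"
  unfolding fin_def by (rule finite_subset[OF supp_add_subset]) simp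

lemma fin_diff: "fin G \<Longrightarrow> fin K \<Longrightarrow> fin (\<lambda>x. G x - K x)"
  unfolding fin_def by (rule finite_subset[OF supp_diff_subset]) simp

lemma supp_one [simp]: "supp (one t) = {t}"
  by (auto simp: supp_def one_def)

lemma supp_zero [simp]: "supp (\<lambda>x. 0) = {}"
  by (simp add: supp_def)

lemma fin_one [simp]: "fin (one t)"
  and fin_zero [simp]: "fin (\<lambda>x. 0)"
  by (simp_all add: fin_def)

lemma fin_subset: "fin G \<Longrightarrow> supp K \<subseteq> supp G \<Longrightarrow> fin K"
  unfolding fin_def by (rule finite_subset)

lemma wsum_add: "fin G \<Longrightarrow> fin K \<Longrightarrow> wsum c (\<lambda>x. G x + K x) = wsum c G + wsum c K"
  unfolding fin_def
  using wsum_eq_sum_superset[of "supp G \<union> supp K" _ c] supp_add_subset[of G K]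
  by (simp add: distrib_right sum.distrib)

lemma wsum_diff: "fin G \<Longrightarrow> fin K \<Longrightarrow> wsum c (\<lambda>x. G x - K x) = wsum c G - wsum c K"
  unfolding fin_def
  using wsum_eq_sum_superset[of "supp G \<union> supp K" _ c] supp_diff_subset[of G K]
  by (simp add: left_diff_distrib sum_subtractf)

lemma wsum_one [simp]: "wsum c (one t) = c t"
  and wsum_zero [simp]: "wsum c (\<lambda>x. 0) = 0"
  by (simp_all add: wsum_def) (simp add: one_def)

lemma wsum_mono:
  assumes "fin G" "fin K" "\<And>x. G x \<le> K x" "\<And>x. 0 \<le> c x"
  shows "wsum c G \<le> wsum c K"
proof -
  have A: "finite (supp G \<union> supp K)" using assms(1,2) by (simp add: fin_def)
  then have "wsum c G = (\<Sum>t\<in>supp G \<union> supp K. G t * c t)" by (rule wsum_eq_sum_superset) auto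
  also have "\<dots> \<le> (\<Sum>t\<in>supp G \<union> supp K. K t * c t)"
    by (rule sum_mono) (simp add: assms(3,4) mult_right_mono)
  also have "\<dots> = wsum c K" using A by (rule wsum_eq_sum_superset[symmetric]) auto
  finally show ?thesis .
qed

lemma pre_ms_wsum: "pre_ms N G s = wsum (\<lambda>t. int (pre N t s)) G"
  and post_ms_wsum: "post_ms N G s = wsum (\<lambda>t. int (post N t s)) G"
  and eff_wsum: "eff N G s = wsum (\<lambda>t. int (post N t s) - int (pre N t s)) G"
  by (simp_all add: pre_ms_def post_ms_def eff_def wsum_def sum_subtractf right_diff_distrib)

lemma labm_wsum: "fin G \<Longrightarrow> labm N G \<alpha> = wsum (\<lambda>t. if lab N t = \<alpha> then 1 else 0) G"
  unfolding labm_def wsum_def fin_def by (simp add: sum.inter_filter if_distrib cong: if_cong)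

lemma eff_add: "fin G \<Longrightarrow> fin K \<Longrightarrow> eff N (\<lambda>x. G x + K x) s = eff N G s + eff N K s"
  and eff_diff: "fin G \<Longrightarrow> fin K \<Longrightarrow> eff N (\<lambda>x. G x - K x) s = eff N G s - eff N K s"
  by (simp_all add: eff_wsum wsum_add wsum_diff)

lemma eff_one: "eff N (one t) s = int (post N t s) - int (pre N t s)"
  and pre_ms_one [simp]: "pre_ms N (one t) s = int (pre N t s)"
  and post_ms_one [simp]: "post_ms N (one t) s = int (post N t s)"
  and eff_zero [simp]: "eff N (\<lambda>x. 0) s = 0"
  and pre_ms_zero [simp]: "pre_ms N (\<lambda>x. 0) s = 0"
  by (simp_all add: eff_wsum pre_ms_wsum post_ms_wsum)

lemma lab_empty_add: "fin G \<Longrightarrow> fin K \<Longrightarrow> lab_empty N G \<Longrightarrow> lab_empty N K \<Longrightarrow> lab_empty N (\<lambda>x. G x + K x)"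
  and lab_empty_diff: "fin G \<Longrightarrow> fin K \<Longrightarrow> lab_empty N G \<Longrightarrow> lab_empty N K \<Longrightarrow> lab_empty N (\<lambda>x. G x - K x)"
  by (simp_all add: lab_empty_def labm_wsum fin_add fin_diff wsum_add wsum_diff)

lemma lab_empty_one: "lab N t = None \<Longrightarrow> lab_empty N (one t)"
  and lab_empty_zero: "lab_empty N (\<lambda>x. 0)"
  by (simp_all add: lab_empty_def labm_wsum)

lemma signed_over_add: "signed_over G X \<Longrightarrow> signed_over K X \<Longrightarrow> signed_over (\<lambda>x. G x + K x) X"
  unfolding signed_over_def using supp_add_subset[of G K] by blast

lemma signed_over_diff: "signed_over G X \<Longrightarrow> signed_over K X \<Longrightarrow> signed_over (\<lambda>x. G x - K x) X"
  unfolding signed_over_def using supp_diff_subset[of G K] by blast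

lemma signed_over_one: "t \<in> X \<Longrightarrow> signed_over (one t) X"
  and signed_over_zero: "signed_over (\<lambda>x. 0) X"
  and mset_over_signed_over: "mset_over G X \<Longrightarrow> signed_over G X"
  by (simp_all add: signed_over_def mset_over_def)

lemma mset_over_one: "mset_over (one t) X \<longleftrightarrow> t \<in> X"
  unfolding mset_over_def supp_one by (simp add: one_def)

lemma lab_empty_visible_zero:
  assumes "fin K" "lab_empty N K" "\<And>x. lab N x \<noteq> None \<Longrightarrow> 0 \<le> K x" and "lab N t = Some b"
  shows "K t = 0"
proof -
  let ?A = "{x \<in> supp K. lab N x = Some b}"
  have "finite ?A" using assms(1) by (simp add: fin_def)
  moreover have "sum K ?A = 0" using assms(2) by (simp add: lab_empty_def labm_def)
  ultimately have "\<forall>x\<in>?A. K x = 0" using assms(3) by (subst sum_nonneg_eq_0_iff[symmetric]) auto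
  then show ?thesis using assms(4) by (auto simp: supp_def)
qed

lemma lab_empty_dominated_visible_zero:
  assumes "fin H" "lab_empty N H" "fin K" "lab_empty N K" "\<And>x. 0 \<le> K x" "\<And>x. H x \<le> K x"
    and "lab N x = Some a"
  shows "K x = 0" "H x = 0"
proof -
  show K: "K x = 0" using assms(3-5,7) by (rule lab_empty_visible_zero)
  have "K x - H x = 0"
    by (rule lab_empty_visible_zero[OF fin_diff[OF assms(3,1)] lab_empty_diff[OF assms(3,1,4,2)] _ assms(7)])
      (simp add: assms(6))
  then show "H x = 0" using K by simp
qed

lemma disjoint_msD1: "disjoint_ms A B \<Longrightarrow> 0 < A s \<Longrightarrow> B s = 0"
  and disjoint_msD2: "disjoint_ms A B \<Longrightarrow> 0 < B s \<Longrightarrow> A s = 0"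
  unfolding disjoint_ms_def by (metis min_def not_gr0 order.strict_iff_not)+

lemma pre_ms_nonneg:
  assumes "\<And>x. H x < 0 \<Longrightarrow> pre N x s = 0"
  shows "0 \<le> pre_ms N H s"
  unfolding pre_ms_def
proof (rule sum_nonneg)
  show "0 \<le> H x * int (pre N x s)" for x using assms[of x] by (cases "H x < 0") auto
qed

lemma post_ms_nonneg:
  assumes "\<And>x. H x < 0 \<Longrightarrow> post N x s = 0"
  shows "0 \<le> post_ms N H s"
  unfolding post_ms_def
proof (rule sum_nonneg)
  show "0 \<le> H x * int (post N x s)" for x using assms[of x] by (cases "H x < 0") auto
qed

lemma post_ms_nonpos:
  assumes "\<And>x. 0 < H x \<Longrightarrow> post N x s = 0"
  shows "post_ms N H s \<le> 0"
  unfolding post_ms_def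
proof (rule sum_nonpos)
  show "H x * int (post N x s) \<le> 0" for x
    using assms[of x] by (cases "0 < H x") (auto simp: mult_nonpos_nonneg)
qed

lemma pre_ms_eq_zero: "(\<And>x. H x \<noteq> 0 \<Longrightarrow> pre N x s = 0) \<Longrightarrow> pre_ms N H s = 0"
  unfolding pre_ms_def by (rule sum.neutral) (simp add: supp_def)

lemma pre_ms_member_le:
  assumes "fin H" "\<And>x. H x < 0 \<Longrightarrow> pre N x s = 0" "0 < H u"
  shows "H u * int (pre N u s) \<le> pre_ms N H s"
  unfolding pre_ms_def
proof (rule member_le_sum)
  show "u \<in> supp H" "finite (supp H)" using assms(1,3) by (auto simp: supp_def fin_def)
  show "0 \<le> H x * int (pre N x s)" for x
    using assms(2)[of x] by (cases "H x < 0") auto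
qed

lemma fin_sum_one: "fin (\<lambda>x. \<Sum>i<(k::nat). one (tr i) x)"
  by (induction k) (simp_all add: fin_add)

lemma lab_empty_sum_one: "(\<And>i. lab N (tr i) = None) \<Longrightarrow> lab_empty N (\<lambda>x. \<Sum>i<(k::nat). one (tr i) x)"
  by (induction k) (simp_all add: fin_sum_one lab_empty_zero lab_empty_add lab_empty_one)

lemma signed_over_sum_one: "(\<And>i. tr i \<in> X) \<Longrightarrow> signed_over (\<lambda>x. \<Sum>i<(k::nat). one (tr i) x) X"
  by (induction k) (simp_all add: signed_over_zero signed_over_add signed_over_one)

lemma wsum_sum_one: "wsum c (\<lambda>x. \<Sum>i<(k::nat). one (tr i) x) = (\<Sum>i<k. c (tr i))"
  by (induction k) (simp_all add: fin_sum_one wsum_add)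

definition cnt :: "'t list \<Rightarrow> 't \<Rightarrow> int" where
  "cnt U = (\<lambda>t. int (count_list U t))"

lemma supp_cnt [simp]: "supp (cnt U) = set U"
  by (auto simp: supp_def cnt_def count_list_0_iff)

lemma fin_cnt [simp]: "fin (cnt U)"
  by (simp add: fin_def)

lemma mset_over_cnt: "set U \<subseteq> X \<Longrightarrow> mset_over (cnt U) X"
  using supp_cnt[of U] by (simp add: mset_over_def cnt_def)

lemma cnt_Nil [simp]: "cnt [] = (\<lambda>x. 0)"
  and cnt_Cons: "cnt (t # U) = (\<lambda>x. one t x + cnt U x)"
  and cnt_append: "cnt (U @ V) = (\<lambda>x. cnt U x + cnt V x)"
  by (auto simp: cnt_def one_def)

lemma cnt_remove_nth:
  assumes "n < length U"
  shows "cnt U = (\<lambda>x. cnt (take n U @ drop (Suc n) U) x + one (U ! n) x)"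
proof -
  have "cnt U = cnt (take n U @ U ! n # drop (Suc n) U)"
    using arg_cong[OF id_take_nth_drop[OF assms], of cnt] .
  then show ?thesis by (simp add: cnt_append cnt_Cons add_ac)
qed

lemma wsum_cnt: "wsum c (cnt U) = (\<Sum>t\<leftarrow>U. c t)"
  by (induction U) (simp_all add: cnt_Cons wsum_add)

lemma pre_ms_cnt: "pre_ms N (cnt U) s = (\<Sum>t\<leftarrow>U. int (pre N t s))"
  by (simp add: pre_ms_wsum wsum_cnt)

lemma pre_ms_cnt_nonneg: "0 \<le> pre_ms N (cnt U) s"
  unfolding pre_ms_cnt by (rule sum_list_nonneg) auto

lemma pre_ms_cnt_member: "t \<in> set U \<Longrightarrow> int (pre N t s) \<le> pre_ms N (cnt U) s"
proof (induction U)
  case (Cons u U)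
  then show ?case
    using pre_ms_cnt_nonneg[of N U s] by (auto simp: pre_ms_cnt intro: add_increasing)
qed simp

lemma pre_ms_cnt_zero: "(\<And>t. t \<in> set U \<Longrightarrow> pre N t s = 0) \<Longrightarrow> pre_ms N (cnt U) s = 0"
  unfolding pre_ms_cnt by (induction U) simp_all

lemma pre_ms_cnt_snoc: "pre_ms N (cnt (U @ [t])) s = pre_ms N (cnt U) s + int (pre N t s)"
  by (simp add: pre_ms_cnt)

lemma pre_ms_cnt_remove_nth: "n < length U \<Longrightarrow>
    pre_ms N (cnt U) s = pre_ms N (cnt (take n U @ drop (Suc n) U)) s + int (pre N (U ! n) s)"
  by (subst cnt_remove_nth) (simp_all add: pre_ms_wsum wsum_add)

lemma labm_cnt: "labm N (cnt U) \<alpha> = int (length (filter (\<lambda>t. lab N t = \<alpha>) U))"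
  by (induction U) (simp_all add: labm_wsum wsum_cnt)

lemma labm_cnt_eq:
  "list_all2 (\<lambda>t t'. lab N t = lab N' t') U U' \<Longrightarrow> labm N (cnt U) = labm N' (cnt U')"
proof -
  assume "list_all2 (\<lambda>t t'. lab N t = lab N' t') U U'"
  then have "length (filter (\<lambda>t. lab N t = \<alpha>) U) = length (filter (\<lambda>t. lab N' t = \<alpha>) U')" for \<alpha>
    by (induction rule: list_all2_induct) auto
  then show ?thesis by (auto simp: labm_cnt)
qed

lemma fires_one: "fires N M (one t) M' \<longleftrightarrow>
    t \<in> trans N \<and> (\<forall>s. int (pre N t s) \<le> M s) \<and> M' = (\<lambda>s. M s - int (pre N t s) + int (post N t s))"
  by (auto simp: fires_def mset_over_one)

lemma enabled_one: "enabled N M (one t) \<longleftrightarrow> t \<in> trans N \<and> (\<forall>s. int (pre N t s) \<le> M s)"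
  by (simp add: enabled_def fires_one)

lemma enabled_pair:
  assumes "t \<in> trans N" "u \<in> trans N" "\<And>s. int (pre N t s) + int (pre N u s) \<le> M s"
  shows "enabled N M (\<lambda>x. one t x + one u x)"
proof -
  let ?G = "\<lambda>x. one t x + one u x"
  have "supp ?G \<subseteq> trans N" "t \<in> supp ?G" "\<forall>x. 0 \<le> ?G x"
    using assms(1,2) by (auto simp: supp_def one_def)
  moreover have "pre_ms N ?G s \<le> M s" for s
    using assms(3)[of s] by (simp add: pre_ms_wsum wsum_add)
  ultimately show ?thesis
    unfolding enabled_def fires_def mset_over_def by (auto simp: fin_add)
qed

lemma wf_net_pre: "wf_net N \<Longrightarrow> s \<notin> places N \<Longrightarrow> pre N t s = 0"
  and wf_net_post: "wf_net N \<Longrightarrow> s \<notin> places N \<Longrightarrow> post N t s = 0"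
  and wf_net_init: "wf_net N \<Longrightarrow> s \<notin> places N \<Longrightarrow> init N s = 0"
  unfolding wf_net_def by blast+

lemma mset_over_init: "wf_net N \<Longrightarrow> mset_over (init_m N) (places N)"
  by (auto simp: mset_over_def supp_def init_m_def wf_net_def)

lemma mset_over_minus_pre:
  "wf_net N \<Longrightarrow> mset_over M (places N) \<Longrightarrow> \<forall>s. int (pre N t s) \<le> M s \<Longrightarrow>
    mset_over (\<lambda>s. M s - int (pre N t s)) (places N)"
  by (auto simp: mset_over_def supp_def wf_net_pre)

lemma mset_over_plus_post:
  "wf_net N \<Longrightarrow> mset_over M (places N) \<Longrightarrow> mset_over (\<lambda>s. M s + int (post N t s)) (places N)"
  by (auto simp: mset_over_def supp_def wf_net_post)

text \<open>The invariant of the ST-semantics that makes hypothesis (5) applicable.\<close>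
definition st_reachable :: "('s, 't, 'a) pnet \<Rightarrow> ('s, 't) st_marking \<Rightarrow> bool" where
  "st_reachable N p \<longleftrightarrow> set (snd p) \<subseteq> trans N \<and> mset_over (fst p) (places N) \<and>
     (\<lambda>s. fst p s + pre_ms N (cnt (snd p)) s) \<in> reach N"

lemma st_reachable_init: "wf_net N \<Longrightarrow> st_reachable N (init_m N, [])"
  by (simp add: st_reachable_def mset_over_init reach_init)

lemma st_step_st_reachable:
  assumes wf: "wf_net N" and st: "st_step N p \<alpha> p'" and p: "st_reachable N p"
  shows "st_reachable N p'"
  using st
proof cases
  case (st_start t a M U)
  then show ?thesis using p mset_over_minus_pre[OF wf]
    by (auto simp: st_reachable_def enabled_one pre_ms_cnt_snoc)
next
  case (st_fin n U a M)
  let ?V = "take n U @ drop (Suc n) U" and ?u = "U ! n"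
  have "set ?V \<subseteq> set U" using set_take_subset set_drop_subset by fastforce
  moreover have "?u \<in> set U" using st_fin(4) by simp
  moreover have "fires N (\<lambda>s. M s + pre_ms N (cnt U) s) (one ?u)
      (\<lambda>s. M s + int (post N ?u s) + pre_ms N (cnt ?V) s)"
    using p st_fin pre_ms_cnt_remove_nth[OF st_fin(4), of N] pre_ms_cnt_nonneg[of N ?V]
    by (auto simp: fires_one st_reachable_def mset_over_def fun_eq_iff
        intro: add_increasing)
  ultimately show ?thesis using p st_fin mset_over_plus_post[OF wf]
    by (auto simp: st_reachable_def intro: reach_step)
next
  case (st_tau t M M' U)
  have "fires N (\<lambda>s. M s + pre_ms N (cnt U) s) (one t) (\<lambda>s. M' s + pre_ms N (cnt U) s)"
    using st_tau(5) pre_ms_cnt_nonneg[of N U] by (auto simp: fires_one fun_eq_iff intro: add_increasing2)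
  moreover have "mset_over (\<lambda>s. M s - int (pre N t s)) (places N)"
    using st_tau(1,5) p mset_over_minus_pre[OF wf] by (simp add: fires_one st_reachable_def)
  then have "mset_over M' (places N)"
    using st_tau(5) mset_over_plus_post[OF wf] by (simp add: fires_one)
  ultimately show ?thesis using p st_tau by (auto simp: st_reachable_def intro: reach_step)
qed

abbreviation tau_steps :: "('s, 't, 'a) pnet \<Rightarrow> ('s, 't) st_marking \<Rightarrow> ('s, 't) st_marking \<Rightarrow> bool" where
  "tau_steps N \<equiv> (\<lambda>p p'. st_step N p Tau p')\<^sup>*\<^sup>*"

lemma st_tau_stepE:
  assumes "st_step N p Tau p'"
  obtains t M' where "p' = (M', snd p)" "lab N t = None" "fires N (fst p) (one t) M'"
  using assms by cases auto

lemma tau_steps_st_reachable: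
  assumes "wf_net N" "tau_steps N p p'" "st_reachable N p"
  shows "st_reachable N p'"
  using assms(2,3) by induction (auto intro: st_step_st_reachable[OF assms(1)])

lemma tau_run_eff:
  assumes "\<And>i. st_step N (ps i) Tau (ps (Suc i))"
  obtains tr where "\<forall>i. tr i \<in> trans N \<and> lab N (tr i) = None"
    "\<forall>k. ps k = (\<lambda>s. fst (ps 0) s + eff N (\<lambda>x. \<Sum>i<k. one (tr i) x) s, snd (ps 0))"
proof -
  have "\<exists>t. lab N t = None \<and> fires N (fst (ps i)) (one t) (fst (ps (Suc i))) \<and> snd (ps (Suc i)) = snd (ps i)" for i
    by (rule st_tau_stepE[OF assms[of i]]) auto
  then obtain tr where tr: "\<And>i. lab N (tr i) = None"
    "\<And>i. fires N (fst (ps i)) (one (tr i)) (fst (ps (Suc i)))" "\<And>i. snd (ps (Suc i)) = snd (ps i)"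
    by metis
  have run: "ps k = (\<lambda>s. fst (ps 0) s + eff N (\<lambda>x. \<Sum>i<k. one (tr i) x) s, snd (ps 0))" for k
  proof (induction k)
    case (Suc k)
    have "fst (ps (Suc k)) = (\<lambda>s. fst (ps k) s + eff N (one (tr k)) s)"
      using tr(2)[of k] by (simp add: fires_one eff_one fun_eq_iff)
    then show ?case
      using Suc tr(3)[of k] by (simp add: eff_add fin_sum_one prod_eq_iff add.assoc)
  qed simp
  have "tr i \<in> trans N" for i using tr(2)[of i] by (simp add: fires_one)
  then show ?thesis using that tr(1) run by blast
qed

section \<open>Firing multisets over acyclic subnets\<close>

lemma acyclic_on_source:
  assumes ac: "acyclic_on N X" and wf: "wf_net N" and YX: "Y \<subseteq> X" and fY: "finite Y" and ne: "Y \<noteq> {}"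
  shows "\<exists>u\<in>Y. \<forall>v\<in>Y. \<forall>s. 0 < pre N u s \<longrightarrow> post N v s = 0"
proof -
  define V where "V = P ` places N \<union> Tr ` X"
  define E where "E = flow N \<inter> (V \<times> V)"
  define R where "R = {(v, u). v \<in> Y \<and> u \<in> Y \<and> (\<exists>s. 0 < post N v s \<and> 0 < pre N u s)}"
  have acE: "acyclic E" using ac unfolding acyclic_on_def Let_def V_def E_def .
  have R_E: "(Tr v, Tr u) \<in> E\<^sup>+" if "(v, u) \<in> R" for v u
  proof -
    from that obtain s where s: "v \<in> Y" "u \<in> Y" "0 < post N v s" "0 < pre N u s" by (auto simp: R_def)
    have "s \<in> places N" using wf s(3) by (auto simp: wf_net_def)
    then have "(Tr v, P s) \<in> E" "(P s, Tr u) \<in> E" using s YX by (auto simp: E_def V_def flow_def)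
    then show ?thesis by (meson r_into_trancl trancl_into_trancl2)
  qed
  have "(Tr x, Tr y) \<in> E\<^sup>+" if "(x, y) \<in> R\<^sup>+" for x y
    using that
  proof induction
    case (step y z)
    from step.IH R_E[OF step.hyps(2)] show ?case by (rule trancl_trans)
  qed (rule R_E)
  then have "acyclic R" using acE unfolding acyclic_def by blast
  moreover have "finite R" using fY by (intro finite_subset[of R "Y \<times> Y"]) (auto simp: R_def)
  ultimately have "wf R" by (rule finite_acyclic_wf[rotated])
  then obtain z where z: "z \<in> Y" "\<And>y. (y, z) \<in> R \<Longrightarrow> y \<notin> Y" using ne by (rule wfE_min') blast
  show ?thesis
  proof (intro bexI[OF _ z(1)] ballI allI impI)
    fix v s assume v: "v \<in> Y" and s: "0 < pre N z s"
    show "post N v s = 0"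
    proof (rule ccontr)
      assume "post N v s \<noteq> 0"
      then have "(v, z) \<in> R" using v s z(1) unfolding R_def by auto
      then show False using z(2) v by blast
    qed
  qed
qed

text \<open>On the preset of a source transition \<open>u\<close> the multiset \<open>K\<close> only consumes, so the
  nonnegativity of \<open>M + [[K]]\<close> leaves enough tokens in \<open>M\<close> to fire \<open>u\<close>.\<close>
lemma acyclic_source_enabled:
  assumes K: "fin K" "\<forall>x. 0 \<le> K x" and u: "u \<in> supp K"
    and src: "\<forall>v\<in>supp K. \<forall>s. 0 < pre N u s \<longrightarrow> post N v s = 0"
    and M: "\<forall>s. 0 \<le> M s" "\<forall>s. 0 \<le> M s + eff N K s"
  shows "int (pre N u s) \<le> M s"
proof (cases "pre N u s = 0")
  case False
  have Ku: "1 \<le> K u" using u K(2)[rule_format, of u] by (simp add: supp_def)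
  have "post_ms N K s = 0" unfolding post_ms_def by (rule sum.neutral) (use src False in auto)
  moreover have "int (pre N u s) \<le> K u * int (pre N u s)" using Ku by (simp add: mult_le_cancel_right1)
  moreover have "K u * int (pre N u s) \<le> pre_ms N K s"
    using K(2) Ku by (intro pre_ms_member_le[OF K(1)]) (simp_all add: leD)
  ultimately show ?thesis using M(2)[rule_format, of s] by (simp add: eff_def)
qed (use M(1) in simp)

lemma tau_steps_fire_acyclic:
  assumes wf: "wf_net N" and ac: "acyclic_on N X" and XT: "X \<subseteq> trans N"
    and "fin K" "\<forall>x. 0 \<le> K x" "supp K \<subseteq> X" "\<forall>x\<in>supp K. lab N x = None"
    and "\<forall>s. 0 \<le> M s" "\<forall>s. 0 \<le> M s + eff N K s"
  shows "tau_steps N (M, U) (\<lambda>s. M s + eff N K s, U)"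
  using assms(4-9)
proof (induction "nat (wsum (\<lambda>_. 1) K)" arbitrary: K M rule: less_induct)
  case less
  note K = less.prems(1-4) and M = less.prems(5,6)
  show ?case
  proof (cases "supp K = {}")
    case True
    then have "K = (\<lambda>x. 0)" by (auto simp: supp_def)
    then show ?thesis by simp
  next
    case False
    obtain u where u: "u \<in> supp K" and src: "\<forall>v\<in>supp K. \<forall>s. 0 < pre N u s \<longrightarrow> post N v s = 0"
      using acyclic_on_source[OF ac wf K(3)] K(1) False by (auto simp: fin_def)
    have Ku: "1 \<le> K u" using u K(2)[rule_format, of u] by (simp add: supp_def)
    have en: "int (pre N u s) \<le> M s" for s by (rule acyclic_source_enabled[OF K(1,2) u src M])
    define K1 where "K1 = (\<lambda>x. K x - one u x)"
    define M1 where "M1 = (\<lambda>s. M s - int (pre N u s) + int (post N u s))"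
    have step: "st_step N (M, U) Tau (M1, U)"
      using u K(3,4) XT en by (intro st_tau[of N u]) (auto simp: fires_one M1_def)
    have "tau_steps N (M1, U) (\<lambda>s. M1 s + eff N K1 s, U)"
    proof (rule less.hyps)
      have "wsum (\<lambda>_. 1) (one u) \<le> wsum (\<lambda>_. 1) K"
        using Ku K(2) by (intro wsum_mono[OF fin_one K(1)]) (auto simp: one_def)
      then show "nat (wsum (\<lambda>_. 1) K1) < nat (wsum (\<lambda>_. 1) K)"
        using K(1) by (simp add: K1_def wsum_diff)
      have "supp K1 \<subseteq> supp K" using u by (auto simp: K1_def supp_def one_def)
      then show "supp K1 \<subseteq> X" "\<forall>x\<in>supp K1. lab N x = None" using K(3,4) by auto
      show "fin K1" using K(1) by (simp add: K1_def fin_diff)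
      show "\<forall>x. 0 \<le> K1 x" using K(2) Ku by (auto simp: K1_def one_def)
      show "\<forall>s. 0 \<le> M1 s" using en M(1) by (simp add: M1_def add_increasing2)
      show "\<forall>s. 0 \<le> M1 s + eff N K1 s" using M(2) K(1) by (simp add: M1_def K1_def eff_diff eff_one)
    qed
    moreover have "(\<lambda>s. M1 s + eff N K1 s) = (\<lambda>s. M s + eff N K s)"
      using K(1) by (simp add: M1_def K1_def eff_diff eff_one fun_eq_iff)
    ultimately have "tau_steps N (M1, U) (\<lambda>s. M s + eff N K s, U)" by simp
    with step show ?thesis by (rule converse_rtranclp_into_rtranclp)
  qed
qed

text \<open>A place in the preset of a negatively counted transition is consumed from neither by
  the positive part nor by \<open>U\<close>; on every other place the negative part only produces.\<close>
lemma eff_positive_part_nonneg: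
  assumes fH: "fin H"
    and disj: "\<And>u v. H u < 0 \<Longrightarrow> 0 < H v \<Longrightarrow> disjoint_ms (pre N u) (pre N v)"
    and disj_U: "\<And>u x. H u < 0 \<Longrightarrow> x \<in> set U \<Longrightarrow> disjoint_ms (pre N u) (pre N x)"
    and B_U: "0 \<le> B + pre_ms N (cnt U) s" and B_H: "0 \<le> B + eff N H s"
  shows "0 \<le> B + eff N (\<lambda>x. max (H x) 0) s"
proof (cases "\<exists>u. H u < 0 \<and> 0 < pre N u s")
  case True
  then obtain u where u: "H u < 0" "0 < pre N u s" by blast
  have pos_free: "pre N v s = 0" if "0 < H v" for v
    using disj[OF u(1) that] u(2) by (rule disjoint_msD1)
  have "pre_ms N (cnt U) s = 0"
    using disj_U[OF u(1)] u(2) by (intro pre_ms_cnt_zero) (meson disjoint_msD1)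
  moreover have "pre_ms N (\<lambda>x. max (H x) 0) s = 0"
    using pos_free by (intro pre_ms_eq_zero) (simp add: max_def split: if_splits)
  moreover have "0 \<le> post_ms N (\<lambda>x. max (H x) 0) s" by (rule post_ms_nonneg) simp
  ultimately show ?thesis using B_U by (simp add: eff_def)
next
  case False
  define Hneg where "Hneg = (\<lambda>x. max (- H x) 0)"
  have fHneg: "fin Hneg" using fH by (rule fin_subset) (auto simp: supp_def Hneg_def)
  have "pre_ms N Hneg s = 0"
    using False by (intro pre_ms_eq_zero) (auto simp: Hneg_def max_def split: if_splits)
  moreover have "0 \<le> post_ms N Hneg s" by (rule post_ms_nonneg) (simp add: Hneg_def)
  ultimately have "0 \<le> eff N Hneg s" by (simp add: eff_def)
  moreover have "(\<lambda>x. max (H x) 0) = (\<lambda>x. H x + Hneg x)" by (auto simp: Hneg_def max_def)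
  ultimately show ?thesis using B_H fH fHneg by (simp add: eff_add)
qed

section \<open>Faithful paths\<close>

lemma is_path_Cons2: "is_path N (x # y # r) \<longleftrightarrow> 0 < arcw N x y \<and> is_path N (y # r)"
  unfolding is_path_def by (simp add: All_less_Suc2)

lemma path_weight_Cons2: "path_weight N (x # y # r) = arcw N x y * path_weight N (y # r)"
  unfolding path_weight_def by (simp del: prod.lessThan_Suc add: prod.lessThan_Suc_shift)

lemma path_weight_single [simp]: "path_weight N [x] = 1"
  by (simp add: path_weight_def)

lemma faithful_path_Cons2: "faithful_path N Tp Sp (x # y # r) \<longleftrightarrow>
    0 < arcw N x y \<and> (case x of Tr t \<Rightarrow> t \<in> Tp | P s \<Rightarrow> faithful_place N Tp Sp s) \<and>
    faithful_path N Tp Sp (y # r)"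
  unfolding faithful_path_def by (auto simp: is_path_Cons2 All_less_Suc2)

lemma path_weight_pos: "is_path N xs \<Longrightarrow> 0 < path_weight N xs"
proof (induction xs rule: induct_list012)
  case (3 x y zs)
  then show ?case by (simp add: path_weight_Cons2 is_path_Cons2)
qed (simp_all add: is_path_def)

lemma faithful_path_from_place:
  assumes "faithful_path N Tp Sp zs" "hd zs = P q" "last zs = Tr t"
  obtains w r where "zs = P q # Tr w # r" "faithful_place N Tp Sp q" "0 < pre N w q"
    "faithful_path N Tp Sp (Tr w # r)"
proof -
  obtain y r where "zs = P q # y # r"
    using assms by (cases zs; cases "tl zs") (auto simp: faithful_path_def is_path_def)
  moreover obtain w where "y = Tr w"
    using assms(1) calculation by (cases y) (auto simp: faithful_path_Cons2)
  ultimately show ?thesis using that assms(1) by (auto simp: faithful_path_Cons2)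
qed

lemma faithful_path_from_transition:
  assumes "faithful_path N Tp Sp (Tr w # z # r)"
  obtains q where "z = P q" "w \<in> Tp" "0 < post N w q" "faithful_path N Tp Sp (P q # r)"
  using assms by (cases z) (auto simp: faithful_path_Cons2 intro: that)

lemma faithful_place_initial:
  assumes "faithful_place N Tp Sp s" "s \<in> Sp" "u \<in> Tp"
  shows "post N u s = 0"
proof (rule ccontr)
  let ?A = "{t \<in> Tp. 0 < post N t s}"
  assume "post N u s \<noteq> 0"
  then have "u \<in> ?A" using assms(3) by simp
  moreover have "finite ?A" "sum (\<lambda>t. post N t s) ?A = 0"
    using assms(1,2) by (auto simp: faithful_place_def)
  ultimately show False using \<open>post N u s \<noteq> 0\<close> by (simp add: sum_eq_0_iff)
qed

lemma faithful_place_fed: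
  assumes "faithful_place N Tp Sp q" "w \<in> Tp" "0 < post N w q"
  shows "q \<notin> Sp" "post N w q = 1" "\<And>u. u \<in> Tp \<Longrightarrow> u \<noteq> w \<Longrightarrow> post N u q = 0"
proof -
  let ?A = "{t \<in> Tp. 0 < post N t q}"
  have f: "finite ?A" and e: "(if q \<in> Sp then 1 else 0) + sum (\<lambda>t. post N t q) ?A = 1"
    using assms(1) by (auto simp: faithful_place_def)
  have split: "sum (\<lambda>t. post N t q) ?A = post N w q + sum (\<lambda>t. post N t q) (?A - {w})"
    using f assms(2,3) by (simp add: sum.remove)
  show "q \<notin> Sp" using e split assms(3) by (auto split: if_splits)
  then have rest: "post N w q + sum (\<lambda>t. post N t q) (?A - {w}) = 1" using e split by simp
  then show "post N w q = 1" using assms(3) by linarith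
  show "post N u q = 0" if "u \<in> Tp" "u \<noteq> w" for u
  proof (rule ccontr)
    assume "post N u q \<noteq> 0"
    then have "post N u q \<le> sum (\<lambda>t. post N t q) (?A - {w})"
      using that f by (intro member_le_sum) auto
    then show False using rest assms(3) \<open>post N u q \<noteq> 0\<close> by linarith
  qed
qed

lemma post_ms_le_single_producer:
  assumes "fin H" "\<And>u. 0 < H u \<Longrightarrow> u \<noteq> w \<Longrightarrow> post N u q = 0" "post N w q \<le> 1"
  shows "post_ms N H q \<le> max 0 (H w)"
proof -
  have "post_ms N H q \<le> (\<Sum>u\<in>supp H. if u = w then max 0 (H w) else 0)"
    unfolding post_ms_def
  proof (rule sum_mono)
    fix u
    show "H u * int (post N u q) \<le> (if u = w then max 0 (H w) else 0)"
    proof (cases "u = w")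
      case True
      then show ?thesis using assms(3) by (cases "post N w q") auto
    qed (use assms(2)[of u] in \<open>cases "0 < H u"; auto simp: mult_nonpos_nonneg\<close>)
  qed
  also have "\<dots> \<le> max 0 (H w)" using assms(1) by (simp add: fin_def)
  finally show ?thesis .
qed

text \<open>Induction along the path: a faithful place \<open>q'\<close> outside \<open>Sp\<close> receives tokens only from
  its unique producer \<open>w \<in> Tp\<close>, with weight 1, so \<open>M q' + \<^sup>\<bullet>H q' \<le> H w\<close>; the \<open>H w\<close> occurrences
  of \<open>w\<close> in turn consume \<open>H w * pre N w q\<close> tokens from the preceding place \<open>q\<close>.\<close>
lemma faithful_path_weight_le:
  assumes fH: "fin H" and pos_Tp: "\<And>x. 0 < H x \<Longrightarrow> x \<in> Tp"
    and disj: "\<And>u v. H u < 0 \<Longrightarrow> 0 < H v \<Longrightarrow> disjoint_ms (pre N u) (pre N v)"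
    and disj_t: "\<And>u. H u < 0 \<Longrightarrow> disjoint_ms (pre N u) (pre N t)"
    and M_t: "\<And>s. int (pre N t s) \<le> M s" and M_nonneg: "\<And>s. 0 \<le> M s"
    and outside: "\<And>q. q \<notin> Sp \<Longrightarrow> M q + pre_ms N H q \<le> post_ms N H q"
  shows "faithful_path N Tp Sp zs \<Longrightarrow> hd zs = P q \<Longrightarrow> last zs = Tr t \<Longrightarrow>
    int (path_weight N zs) \<le> M q + pre_ms N H q"
proof (induction "length zs" arbitrary: zs q rule: less_induct)
  case less
  obtain w r where zs: "zs = P q # Tr w # r" and q: "faithful_place N Tp Sp q"
    and w: "0 < pre N w q" and path: "faithful_path N Tp Sp (Tr w # r)"
    by (rule faithful_path_from_place[OF less.prems])
  show ?case
  proof (cases r)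
    case Nil
    then have "w = t" using less.prems(3) zs by simp
    then have "0 \<le> pre_ms N H q"
      using disj_t w \<open>w = t\<close> by (intro pre_ms_nonneg) (meson disjoint_msD2)
    then show ?thesis using zs Nil \<open>w = t\<close> M_t[of q] by (simp add: path_weight_Cons2)
  next
    case (Cons z r')
    obtain q' where z: "z = P q'" and wTp: "w \<in> Tp" and w': "0 < post N w q'"
      and path': "faithful_path N Tp Sp (P q' # r')"
      using path[unfolded Cons] by (rule faithful_path_from_transition)
    have last': "last (P q' # r') = Tr t" using less.prems(3) zs Cons z by simp
    then obtain y r'' where "r' = y # r''" by (cases r') auto
    then have "faithful_place N Tp Sp q'" using path' by (simp add: faithful_path_Cons2)
    note fed = faithful_place_fed[OF this wTp w']
    have "post_ms N H q' \<le> max 0 (H w)"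
      using pos_Tp fed(2,3) by (intro post_ms_le_single_producer[OF fH]) simp_all
    moreover have "int (path_weight N (P q' # r')) \<le> M q' + pre_ms N H q'"
      using less.hyps[of "P q' # r'" q'] path' last' zs Cons z by simp
    moreover have "0 < path_weight N (P q' # r')"
      using path' by (simp add: faithful_path_def path_weight_pos)
    ultimately have Hw: "0 < H w" "int (path_weight N (P q' # r')) \<le> H w"
      using outside[OF fed(1)] by linarith+
    have "\<And>u. H u < 0 \<Longrightarrow> pre N u q = 0"
      using disj Hw(1) w by (meson disjoint_msD2)
    then have member: "H w * int (pre N w q) \<le> pre_ms N H q"
      using Hw(1) by (rule pre_ms_member_le[OF fH])
    have "int (path_weight N zs) = int (pre N w q) * int (path_weight N (P q' # r'))"
      using zs Cons z fed(2) by (simp add: path_weight_Cons2)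
    also have "\<dots> \<le> int (pre N w q) * H w" using Hw(2) by (rule mult_left_mono) simp
    also have "\<dots> \<le> M q + pre_ms N H q" using member M_nonneg[of q] by (simp add: mult.commute)
    finally show ?thesis .
  qed
qed

lemma origins_witness:
  assumes "0 < k" "enat k \<le> origins N Tp Sp x s"
  obtains zs where "s \<in> Sp" "faithful_path N Tp Sp zs" "hd zs = P s" "last zs = x"
    "k \<le> path_weight N zs"
proof -
  let ?W = "{enat (path_weight N xs) | xs. faithful_path N Tp Sp xs \<and> hd xs = P s \<and> last xs = x}"
  have Sp: "s \<in> Sp" using assms by (auto simp: origins_def enat_0_iff split: if_splits)
  have "enat (k - 1) < enat k" using assms(1) by simp
  also have "enat k \<le> Sup ?W" using assms(2) Sp by (simp add: origins_def)
  finally obtain zs where "faithful_path N Tp Sp zs" "hd zs = P s" "last zs = x"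
    "enat (k - 1) < enat (path_weight N zs)"
    unfolding less_Sup_iff by blast
  then show ?thesis using that Sp assms(1) by simp
qed

section \<open>The simulation relation\<close>

locale implementation_setting =
  fixes N :: "('s, 't, 'a) pnet" and N' :: "('s, 't2, 'a) pnet"
    and Tp Tm :: "'t set" and NF :: "('t \<Rightarrow> int) set" and f :: "'t \<Rightarrow> nat"
  assumes wfN: "wf_net N" and wfN': "wf_net N'" and plainN': "plain N'"
    and M0': "\<forall>s. init N' s = (if s \<in> places N' then init N s else 0)"
    and Tp_sub: "Tp \<subseteq> trans N" and Tm_sub: "Tm \<subseteq> trans N"
    and acyclic_Tp: "acyclic_on N Tp" and acyclic_Tm: "acyclic_on N Tm"
    and visible_match: "\<forall>t \<in> trans N. lab N t \<noteq> None \<longrightarrow>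
       (\<exists>t' \<in> trans N'. lab N' t' = lab N t \<and>
          (\<forall>s. enat (pre N' t' s) \<le>
                 origins N Tp (places N' \<union> {s \<in> places N. 0 < init N s}) (Tr t) s) \<and>
          (\<exists>G. fin G \<and> mset_over G (trans N) \<and> lab_empty N G \<and>
               eff N' (one t') = eff N (\<lambda>x. one t x + G x)))"
    and f_pos: "\<forall>t \<in> trans N. 0 < f t"
    and normal_form: "\<forall>G. fin G \<and> signed_over G (trans N) \<and> lab_empty N G \<longrightarrow>
          (\<exists>H \<in> NF. fin H \<and> lab_empty N H \<and> eff N H = eff N G \<and>
             (\<Sum>t\<in>supp H. H t * int (f t)) = (\<Sum>t\<in>supp G. G t * int (f t)))"
    and compensation: "\<forall>M' U' U. mset_over M' (places N') \<and> mset_over U' (trans N') \<and> fin U' \<and>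
       mset_over U (trans N) \<and> fin U \<and> labm N U = labm N' U' \<and>
       (\<lambda>s. M' s + pre_ms N' U' s) \<in> reach N' \<longrightarrow>
       (\<exists>HMU. fin HMU \<and> mset_over HMU Tp \<and> lab_empty N HMU \<and>
          (\<forall>H \<in> NF. fin H \<longrightarrow>
             (let M = (\<lambda>s. M' s + pre_ms N' U' s + (init_m N s - init_m N' s) + eff N H s - pre_ms N U s);
                  MMU = (\<lambda>s. M' s + pre_ms N' U' s + (init_m N s - init_m N' s) + eff N HMU s - pre_ms N U s);
                  MU = (\<lambda>s. M s + pre_ms N U s)
              in mset_over M (places N) \<and> MU \<in> reach N \<longrightarrow>
                 mset_over MMU (places N) \<and>
                 (\<forall>a. can_do N' M' (Some a) \<longrightarrow> can_do N MMU (Some a)) \<and>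
                 (\<forall>t. H t \<le> HMU t) \<and>
                 (\<forall>u. H u < 0 \<longrightarrow> u \<in> Tm) \<and>
                 (\<forall>u t. H u < 0 \<and> 0 < H t \<longrightarrow> disjoint_ms (pre N u) (pre N t)) \<and>
                 (\<forall>u t. H u < 0 \<and> enabled N MU (one t) \<and> lab N t \<noteq> None \<longrightarrow>
                    disjoint_ms (pre N u) (pre N t)) \<and>
                 (\<forall>t u t' u'. enabled N MU (\<lambda>x. one t x + one u x) \<and>
                    t' \<in> trans N' \<and> u' \<in> trans N' \<and> lab N' t' = lab N t \<and> lab N' u' = lab N u \<longrightarrow>
                    disjoint_ms (pre N' t') (pre N' u')))))"
begin

abbreviation Sp :: "'s set" where
  "Sp \<equiv> places N' \<union> {s \<in> places N. 0 < init N s}"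

text \<open>The marking \<open>M\<close> of hypothesis (5), with the multisets \<open>U'\<close> and \<open>U\<close> of started
  transitions given as lists.\<close>
definition lifted :: "('s \<Rightarrow> int) \<Rightarrow> 't2 list \<Rightarrow> 't list \<Rightarrow> ('t \<Rightarrow> int) \<Rightarrow> 's \<Rightarrow> int" where
  "lifted M' U' U H =
     (\<lambda>s. M' s + pre_ms N' (cnt U') s + (init_m N s - init_m N' s) + eff N H s - pre_ms N (cnt U) s)"

definition related :: "('s, 't) st_marking \<Rightarrow> ('s, 't2) st_marking \<Rightarrow> bool" where
  "related p q \<longleftrightarrow> st_reachable N p \<and> st_reachable N' q \<and>
     list_all2 (\<lambda>t t'. lab N t = lab N' t') (snd p) (snd q) \<and>
     (\<exists>H. fin H \<and> signed_over H (trans N) \<and> lab_empty N H \<and> fst p = lifted (fst q) (snd q) (snd p) H)"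

definition cond5 :: "('s \<Rightarrow> int) \<Rightarrow> 't2 list \<Rightarrow> 't list \<Rightarrow> ('t \<Rightarrow> int) \<Rightarrow> ('t \<Rightarrow> int) \<Rightarrow> bool" where
  "cond5 M' U' U HMU H \<longleftrightarrow>
     (let MU = (\<lambda>s. lifted M' U' U H s + pre_ms N (cnt U) s) in
       mset_over (lifted M' U' U HMU) (places N) \<and>
       (\<forall>a. can_do N' M' (Some a) \<longrightarrow> can_do N (lifted M' U' U HMU) (Some a)) \<and>
       (\<forall>t. H t \<le> HMU t) \<and>
       (\<forall>u. H u < 0 \<longrightarrow> u \<in> Tm) \<and>
       (\<forall>u t. H u < 0 \<and> 0 < H t \<longrightarrow> disjoint_ms (pre N u) (pre N t)) \<and>
       (\<forall>u t. H u < 0 \<and> enabled N MU (one t) \<and> lab N t \<noteq> None \<longrightarrow>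
          disjoint_ms (pre N u) (pre N t)) \<and>
       (\<forall>t u t' u'. enabled N MU (\<lambda>x. one t x + one u x) \<and>
          t' \<in> trans N' \<and> u' \<in> trans N' \<and> lab N' t' = lab N t \<and> lab N' u' = lab N u \<longrightarrow>
          disjoint_ms (pre N' t') (pre N' u')))"

lemma cond5D:
  assumes "cond5 M' U' U HMU H"
  shows "mset_over (lifted M' U' U HMU) (places N)"
    and "can_do N' M' (Some a) \<Longrightarrow> can_do N (lifted M' U' U HMU) (Some a)"
    and "H t \<le> HMU t"
    and "H u < 0 \<Longrightarrow> u \<in> Tm"
    and "H u < 0 \<Longrightarrow> 0 < H t \<Longrightarrow> disjoint_ms (pre N u) (pre N t)"
    and "H u < 0 \<Longrightarrow> enabled N (\<lambda>s. lifted M' U' U H s + pre_ms N (cnt U) s) (one t) \<Longrightarrow>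
      lab N t \<noteq> None \<Longrightarrow> disjoint_ms (pre N u) (pre N t)"
    and "enabled N (\<lambda>s. lifted M' U' U H s + pre_ms N (cnt U) s) (\<lambda>x. one t x + one u x) \<Longrightarrow>
      t' \<in> trans N' \<Longrightarrow> u' \<in> trans N' \<Longrightarrow> lab N' t' = lab N t \<Longrightarrow> lab N' u' = lab N u \<Longrightarrow>
      disjoint_ms (pre N' t') (pre N' u')"
  using assms unfolding cond5_def Let_def by blast+

lemma visible_N': "t' \<in> trans N' \<Longrightarrow> lab N' t' \<noteq> None"
  using plainN' by (simp add: plain_def)

lemma inj_lab_N': "t1 \<in> trans N' \<Longrightarrow> t2 \<in> trans N' \<Longrightarrow> lab N' t1 = lab N' t2 \<Longrightarrow> t1 = t2"
  using plainN' by (simp add: plain_def inj_on_def)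

lemma no_tau_N': "\<not> st_step N' q Tau q'"
proof
  assume "st_step N' q Tau q'"
  then obtain t M'' where "lab N' t = None" "fires N' (fst q) (one t) M''" by (rule st_tau_stepE)
  then show False using visible_N'[of t] by (simp add: fires_one)
qed

lemma lifted_add: "fin H \<Longrightarrow> fin K \<Longrightarrow> lifted M' U' U (\<lambda>x. H x + K x) = (\<lambda>s. lifted M' U' U H s + eff N K s)"
  by (simp add: lifted_def eff_add fun_eq_iff)

lemma lifted_eff_cong: "eff N H = eff N K \<Longrightarrow> lifted M' U' U H = lifted M' U' U K"
  by (simp add: lifted_def)

lemma lifted_base: "lifted M' U' U H s = lifted M' U' U (\<lambda>x. 0) s + eff N H s"
  by (simp add: lifted_def)

lemma lifted_base_nonneg:
  "mset_over M' (places N') \<Longrightarrow> 0 \<le> lifted M' U' U (\<lambda>x. 0) s + pre_ms N (cnt U) s"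
  using M0' pre_ms_cnt_nonneg[of N' U' s]
  by (simp add: lifted_def mset_over_def init_m_def add_increasing2)

lemma lifted_on_places':
  "s \<in> places N' \<Longrightarrow> lifted M' U' U H s = M' s + pre_ms N' (cnt U') s + eff N H s - pre_ms N (cnt U) s"
  using M0' by (simp add: lifted_def init_m_def)

lemma lifted_outside_Sp:
  assumes "mset_over M' (places N')" "s \<notin> Sp"
  shows "lifted M' U' U H s = eff N H s - pre_ms N (cnt U) s"
proof -
  have "M' s = 0" "pre_ms N' (cnt U') s = 0" "init N' s = 0" "init N s = 0"
    using assms wfN' wf_net_init[OF wfN, of s] M0'
    by (auto simp: mset_over_def supp_def pre_ms_cnt_zero wf_net_pre)
  then show ?thesis by (simp add: lifted_def init_m_def)
qed

lemma related_init: "related (init_m N, []) (init_m N', [])"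
proof -
  have "init_m N = lifted (init_m N') [] [] (\<lambda>x. 0)" by (simp add: lifted_def)
  then show ?thesis unfolding related_def
    using st_reachable_init[OF wfN] st_reachable_init[OF wfN'] signed_over_zero lab_empty_zero
    by force
qed

lemma related_tau:
  assumes rel: "related p q" and st: "st_step N p Tau p'"
  shows "related p' q"
proof -
  obtain t M2 where p': "p' = (M2, snd p)" and t: "lab N t = None" "fires N (fst p) (one t) M2"
    using st by (rule st_tau_stepE)
  obtain H where H: "fin H" "signed_over H (trans N)" "lab_empty N H"
    "fst p = lifted (fst q) (snd q) (snd p) H"
    using rel by (auto simp: related_def)
  have "t \<in> trans N" using t(2) by (simp add: fires_one)
  then have "fin (\<lambda>x. H x + one t x)" "signed_over (\<lambda>x. H x + one t x) (trans N)"
    "lab_empty N (\<lambda>x. H x + one t x)"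
    using H t(1) by (simp_all add: fin_add signed_over_add signed_over_one lab_empty_add lab_empty_one)
  moreover have "M2 = lifted (fst q) (snd q) (snd p) (\<lambda>x. H x + one t x)"
    using t(2) H(1,4) by (simp add: fires_one lifted_add eff_one fun_eq_iff)
  moreover have "st_reachable N p'" using rel st st_step_st_reachable[OF wfN] by (simp add: related_def)
  ultimately show ?thesis using rel p' unfolding related_def by auto
qed

lemma related_start:
  assumes rel: "related (M, U) (M', U')" and t: "lab N t = Some a" "enabled N M (one t)"
    and t': "lab N' t' = Some a" "enabled N' M' (one t')"
  shows "related (\<lambda>s. M s - int (pre N t s), U @ [t]) (\<lambda>s. M' s - int (pre N' t' s), U' @ [t'])"
proof -
  have "st_reachable N (\<lambda>s. M s - int (pre N t s), U @ [t])"
    using rel st_step_st_reachable[OF wfN st_start[OF t]] by (simp add: related_def)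
  moreover have "st_reachable N' (\<lambda>s. M' s - int (pre N' t' s), U' @ [t'])"
    using rel st_step_st_reachable[OF wfN' st_start[OF t']] by (simp add: related_def)
  moreover have "list_all2 (\<lambda>t t'. lab N t = lab N' t') (U @ [t]) (U' @ [t'])"
    using rel t(1) t'(1) by (simp add: related_def list_all2_appendI)
  moreover have "(\<lambda>s. M s - int (pre N t s)) = lifted (\<lambda>s. M' s - int (pre N' t' s)) (U' @ [t']) (U @ [t]) H"
    if "M = lifted M' U' U H" for H
    using that by (simp add: lifted_def pre_ms_cnt_snoc fun_eq_iff)
  ultimately show ?thesis using rel unfolding related_def by auto
qed

lemma related_length: "related p q \<Longrightarrow> length (snd p) = length (snd q)"
  unfolding related_def using list_all2_lengthD by blast

lemma related_nth:
  assumes "related (M, U) (M', U')" "n < length U"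
  shows "lab N (U ! n) = lab N' (U' ! n)" "U' ! n \<in> trans N'"
  using assms list_all2_nthD[of _ U U' n] related_length[OF assms(1)]
  by (auto simp: related_def st_reachable_def)

text \<open>In terms of \<open>M + \<^sup>\<bullet>U\<close>, finishing \<open>u\<close> changes the marking of \<open>N\<close> by \<open>[[u]]\<close> and
  that of \<open>N'\<close> by \<open>[[u']] = [[u + G]]\<close>, hypothesis (3); the compensation absorbs \<open>-G\<close>.\<close>
lemma related_fin:
  assumes rel: "related (M, U) (M', U')" and n: "n < length U"
  shows "related (\<lambda>s. M s + int (post N (U ! n) s), take n U @ drop (Suc n) U)
    (\<lambda>s. M' s + int (post N' (U' ! n) s), take n U' @ drop (Suc n) U')"
proof -
  let ?u = "U ! n" and ?u' = "U' ! n" and ?V = "take n U @ drop (Suc n) U"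
    and ?V' = "take n U' @ drop (Suc n) U'"
  have n': "n < length U'" using related_length[OF rel] n by simp
  have lab: "lab N ?u = lab N' ?u'" "?u' \<in> trans N'" by (rule related_nth[OF rel n])+
  then obtain a where a: "lab N ?u = Some a" "lab N' ?u' = Some a" using visible_N' by fastforce
  have "?u \<in> trans N" using rel n by (auto simp: related_def st_reachable_def)
  then obtain t'' G where t'': "t'' \<in> trans N'" "lab N' t'' = lab N ?u"
    and G: "fin G" "mset_over G (trans N)" "lab_empty N G" "eff N' (one t'') = eff N (\<lambda>x. one ?u x + G x)"
    using visible_match a(1) by blast
  have "t'' = ?u'" using inj_lab_N'[OF t''(1) lab(2)] t''(2) lab(1) by simp
  then have eff_u': "int (post N' ?u' s) - int (pre N' ?u' s) = int (post N ?u s) - int (pre N ?u s) + eff N G s"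
    for s using fun_cong[OF G(4), of s] G(1) by (simp add: eff_add eff_one)
  obtain H where H: "fin H" "signed_over H (trans N)" "lab_empty N H" "M = lifted M' U' U H"
    using rel by (auto simp: related_def)
  have "M s + int (post N ?u s) = lifted (\<lambda>s. M' s + int (post N' ?u' s)) ?V' ?V (\<lambda>x. H x - G x) s"
    for s
    using fun_cong[OF H(4), of s] eff_u'[of s] pre_ms_cnt_remove_nth[OF n, of N s]
      pre_ms_cnt_remove_nth[OF n', of N' s]
    unfolding lifted_def eff_diff[OF H(1) G(1)] by linarith
  moreover have "fin (\<lambda>x. H x - G x)" "signed_over (\<lambda>x. H x - G x) (trans N)"
    "lab_empty N (\<lambda>x. H x - G x)"
    using H G by (simp_all add: fin_diff signed_over_diff mset_over_signed_over lab_empty_diff)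
  moreover have "st_reachable N (\<lambda>s. M s + int (post N ?u s), ?V)"
    using rel st_step_st_reachable[OF wfN st_fin[OF n a(1)]] by (simp add: related_def)
  moreover have "st_reachable N' (\<lambda>s. M' s + int (post N' ?u' s), ?V')"
    using rel st_step_st_reachable[OF wfN' st_fin[OF n' a(2)]] by (simp add: related_def)
  moreover have "list_all2 (\<lambda>t t'. lab N t = lab N' t') ?V ?V'"
    using rel by (simp add: related_def list_all2_appendI list_all2_takeI list_all2_dropI)
  ultimately show ?thesis unfolding related_def by auto
qed

lemma related_normal_form:
  assumes "related (M, U) (M', U')"
  obtains H where "H \<in> NF" "fin H" "lab_empty N H" "M = lifted M' U' U H"
proof -
  obtain G where "fin G" "signed_over G (trans N)" "lab_empty N G" "M = lifted M' U' U G"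
    using assms by (auto simp: related_def)
  moreover from this obtain H where "H \<in> NF" "fin H" "lab_empty N H" "eff N H = eff N G"
    using normal_form by blast
  ultimately show ?thesis using that[of H] lifted_eff_cong[of H G] by simp
qed

lemma compensation_witness:
  assumes "related (M, U) (M', U')"
  obtains HMU where "fin HMU" "mset_over HMU Tp" "lab_empty N HMU"
    "\<forall>H \<in> NF. fin H \<longrightarrow> related (lifted M' U' U H, U) (M', U') \<longrightarrow> cond5 M' U' U HMU H"
proof -
  from assms have prem: "mset_over M' (places N') \<and> mset_over (cnt U') (trans N') \<and> fin (cnt U') \<and>
      mset_over (cnt U) (trans N) \<and> fin (cnt U) \<and> labm N (cnt U) = labm N' (cnt U') \<and>
      (\<lambda>s. M' s + pre_ms N' (cnt U') s) \<in> reach N'"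
    by (simp add: related_def st_reachable_def mset_over_cnt labm_cnt_eq)
  have "\<exists>HMU. fin HMU \<and> mset_over HMU Tp \<and> lab_empty N HMU \<and>
      (\<forall>H \<in> NF. fin H \<longrightarrow> mset_over (lifted M' U' U H) (places N) \<and>
         (\<lambda>s. lifted M' U' U H s + pre_ms N (cnt U) s) \<in> reach N \<longrightarrow> cond5 M' U' U HMU H)"
    using compensation[THEN spec, THEN spec, THEN spec, THEN mp, OF prem]
    unfolding cond5_def lifted_def Let_def .
  then obtain HMU where "fin HMU" "mset_over HMU Tp" "lab_empty N HMU" and h5:
    "\<And>H. H \<in> NF \<Longrightarrow> fin H \<Longrightarrow> mset_over (lifted M' U' U H) (places N) \<Longrightarrow>
       (\<lambda>s. lifted M' U' U H s + pre_ms N (cnt U) s) \<in> reach N \<Longrightarrow> cond5 M' U' U HMU H"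
    by blast
  moreover have "mset_over (lifted M' U' U H) (places N)"
    "(\<lambda>s. lifted M' U' U H s + pre_ms N (cnt U) s) \<in> reach N"
    if "related (lifted M' U' U H, U) (M', U')" for H
    using that by (simp_all add: related_def st_reachable_def)
  ultimately show ?thesis using that by blast
qed

text \<open>Along a tau-run of \<open>N\<close> staying related to \<open>(M', U')\<close>, the normal forms of the
  compensations grow in \<open>f\<close>-weight by at least one per step, but are bounded by \<open>H\<^sub>M\<^sub>',\<^sub>U\<close>.\<close>
lemma related_no_divergence:
  assumes run: "\<And>i. st_step N (ps i) Tau (ps (Suc i))" and rel: "\<And>i. related (ps i) (M', U')"
  shows False
proof -
  obtain tr where "\<forall>i. tr i \<in> trans N \<and> lab N (tr i) = None"
    "\<forall>k. ps k = (\<lambda>s. fst (ps 0) s + eff N (\<lambda>x. \<Sum>i<k. one (tr i) x) s, snd (ps 0))"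
    by (rule tau_run_eff[of N ps, OF run])
  then have tr: "\<And>i. tr i \<in> trans N" "\<And>i. lab N (tr i) = None"
    and ps: "\<And>k. ps k = (\<lambda>s. fst (ps 0) s + eff N (\<lambda>x. \<Sum>i<k. one (tr i) x) s, snd (ps 0))"
    by blast+
  obtain M U where ps0: "ps 0 = (M, U)" by fastforce
  obtain H where H: "fin H" "signed_over H (trans N)" "lab_empty N H" "M = lifted M' U' U H"
    using rel[of 0] ps0 by (auto simp: related_def)
  obtain HMU where HMU: "fin HMU" "mset_over HMU Tp" "lab_empty N HMU"
    "\<forall>H \<in> NF. fin H \<longrightarrow> related (lifted M' U' U H, U) (M', U') \<longrightarrow> cond5 M' U' U HMU H"
    by (rule compensation_witness[OF rel[of 0, unfolded ps0]])
  let ?w = "\<lambda>G. wsum (\<lambda>t. int (f t)) G"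
  have bound: "?w H + int k \<le> ?w HMU" for k
  proof -
    let ?G = "\<lambda>x. \<Sum>i<k. one (tr i) x"
    have "fin (\<lambda>x. H x + ?G x)" "signed_over (\<lambda>x. H x + ?G x) (trans N)"
      "lab_empty N (\<lambda>x. H x + ?G x)"
      using H tr by (simp_all add: fin_add fin_sum_one signed_over_add signed_over_sum_one
          lab_empty_add lab_empty_sum_one)
    then obtain Hk where Hk: "Hk \<in> NF" "fin Hk" "eff N Hk = eff N (\<lambda>x. H x + ?G x)"
      "?w Hk = ?w (\<lambda>x. H x + ?G x)"
      using normal_form unfolding wsum_def by blast
    have "lifted M' U' U Hk = fst (ps k)"
      using ps[of k] ps0 H(1,4) by (simp add: lifted_eff_cong[OF Hk(3)] lifted_add fin_sum_one)
    then have "related (lifted M' U' U Hk, U) (M', U')" using rel[of k] ps[of k] ps0 by simp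
    then have "\<forall>x. Hk x \<le> HMU x" using HMU(4)[rule_format, OF Hk(1,2)] by (simp add: cond5_def Let_def)
    then have "?w Hk \<le> ?w HMU" using Hk(2) HMU(1) by (intro wsum_mono) auto
    moreover have "int k \<le> ?w ?G"
    proof -
      have "int k = (\<Sum>i<k. 1)" by simp
      also have "\<dots> \<le> (\<Sum>i<k. int (f (tr i)))"
        using f_pos tr(1) by (intro sum_mono) (simp add: Suc_le_eq)
      finally show ?thesis by (simp add: wsum_sum_one)
    qed
    ultimately show ?thesis using Hk(4) H(1) by (simp add: wsum_add fin_sum_one)
  qed
  show False using bound[of "nat (?w HMU - ?w H) + 1"] by linarith
qed

lemma related_started_disjoint:
  assumes rel: "related (M, U) (M', U')" and c5: "cond5 M' U' U HMU H" and M: "M = lifted M' U' U H"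
    and t: "enabled N M (one t)" and t': "t' \<in> trans N'" "lab N' t' = lab N t"
    and s: "0 < pre N' t' s"
  shows "pre_ms N' (cnt U') s = 0"
proof (rule pre_ms_cnt_zero)
  fix u' assume "u' \<in> set U'"
  then obtain i where i: "i < length U'" "U' ! i = u'" by (auto simp: in_set_conv_nth)
  let ?u = "U ! i"
  have "i < length U" using related_length[OF rel] i by simp
  then have u: "lab N' u' = lab N ?u" "u' \<in> trans N'" "?u \<in> set U"
    using related_nth[OF rel] i by auto
  have "?u \<in> trans N" using rel u(3) by (auto simp: related_def st_reachable_def)
  moreover have "t \<in> trans N" "\<And>s. int (pre N t s) \<le> M s" using t by (simp_all add: enabled_one)
  ultimately have "enabled N (\<lambda>s. lifted M' U' U H s + pre_ms N (cnt U) s) (\<lambda>x. one t x + one ?u x)"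
    using M by (intro enabled_pair) (auto intro: add_mono pre_ms_cnt_member[OF u(3)])
  then have "disjoint_ms (pre N' t') (pre N' u')" using cond5D(7)[OF c5] t' u by blast
  then show "pre N' u' s = 0" using s by (rule disjoint_msD1)
qed

text \<open>By hypothesis (3), the tokens \<open>t'\<close> needs on a place \<open>s\<close> of \<open>N'\<close> are bounded by the
  weight of a faithful path from \<open>s\<close> to \<open>t\<close>, hence by \<open>M s + \<^sup>\<bullet>H s\<close>. This is at most
  \<open>M' s\<close>: no started transition of \<open>N'\<close> consumes from \<open>s\<close> by (5)(g), and no transition of
  \<open>Tp\<close> produces into the faithful place \<open>s\<close>.\<close>
lemma related_enables_match:
  assumes rel: "related (M, U) (M', U')" and t: "enabled N M (one t)" "lab N t \<noteq> None"
    and t': "t' \<in> trans N'" "lab N' t' = lab N t"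
    and orig: "\<forall>s. enat (pre N' t' s) \<le> origins N Tp Sp (Tr t) s"
  shows "enabled N' M' (one t')"
proof -
  obtain H where H: "H \<in> NF" "fin H" "lab_empty N H" "M = lifted M' U' U H"
    by (rule related_normal_form[OF rel])
  obtain HMU where HMU: "fin HMU" "mset_over HMU Tp" "lab_empty N HMU"
    "\<forall>H \<in> NF. fin H \<longrightarrow> related (lifted M' U' U H, U) (M', U') \<longrightarrow> cond5 M' U' U HMU H"
    by (rule compensation_witness[OF rel])
  have c5: "cond5 M' U' U HMU H" using HMU(4) H rel by simp
  have M'_nonneg: "\<And>s. 0 \<le> M' s" and M_nonneg: "\<And>s. 0 \<le> M s"
    and M'_places: "mset_over M' (places N')"
    using rel by (simp_all add: related_def st_reachable_def mset_over_def)
  have M_t: "\<And>s. int (pre N t s) \<le> M s" using t(1) by (simp add: enabled_one)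
  have pos_Tp: "x \<in> Tp" if "0 < H x" for x
    using cond5D(3)[OF c5, of x] that HMU(2) by (auto simp: mset_over_def supp_def)
  have "enabled N (\<lambda>s. lifted M' U' U H s + pre_ms N (cnt U) s) (one t)"
    using t(1) H(4) pre_ms_cnt_nonneg[of N U] by (auto simp: enabled_one intro: add_increasing2)
  then have disj_t: "\<And>u. H u < 0 \<Longrightarrow> disjoint_ms (pre N u) (pre N t)"
    using cond5D(6)[OF c5] t(2) by blast
  have outside: "M q + pre_ms N H q \<le> post_ms N H q" if "q \<notin> Sp" for q
    using lifted_outside_Sp[OF M'_places that] H(4) pre_ms_cnt_nonneg[of N U q] by (simp add: eff_def)
  show ?thesis unfolding enabled_one
  proof (intro conjI t'(1) allI)
    fix s
    show "int (pre N' t' s) \<le> M' s"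
    proof (cases "pre N' t' s = 0")
      case False
      then have "0 < pre N' t' s" by simp
      then obtain zs where zs: "s \<in> Sp" "faithful_path N Tp Sp zs" "hd zs = P s" "last zs = Tr t"
        "pre N' t' s \<le> path_weight N zs"
        by (rule origins_witness[OF _ orig[rule_format]])
      obtain w r where "faithful_place N Tp Sp s" by (rule faithful_path_from_place[OF zs(2-4)])
      then have "post N x s = 0" if "0 < H x" for x
        using zs(1) pos_Tp[OF that] by (rule faithful_place_initial)
      then have "post_ms N H s \<le> 0" by (rule post_ms_nonpos)
      moreover have "int (path_weight N zs) \<le> M s + pre_ms N H s"
        by (rule faithful_path_weight_le[OF H(2) pos_Tp cond5D(5)[OF c5] disj_t M_t M_nonneg outside zs(2-4)])
      moreover have "pre_ms N' (cnt U') s = 0"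
        using False by (intro related_started_disjoint[OF rel c5 H(4) t(1) t']) simp
      moreover have "s \<in> places N'" using wf_net_pre[OF wfN', of s t'] False by fastforce
      then have "M s = M' s + pre_ms N' (cnt U') s + eff N H s - pre_ms N (cnt U) s"
        using H(4) by (simp add: lifted_on_places')
      ultimately show ?thesis using zs(5) pre_ms_cnt_nonneg[of N U s] by (simp add: eff_def)
    qed (simp add: M'_nonneg)
  qed
qed

lemma related_simulates_start:
  assumes rel: "related (M, U) (M', U')" and st: "st_step N (M, U) (Start a) p'"
  shows "\<exists>q'. st_step N' (M', U') (Start a) q' \<and> related p' q'"
proof -
  from st obtain t where t: "lab N t = Some a" "enabled N M (one t)"
    and p': "p' = (\<lambda>s. M s - int (pre N t s), U @ [t])"
    by cases auto
  have "t \<in> trans N" using t(2) by (simp add: enabled_one)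
  then obtain t' where t': "t' \<in> trans N'" "lab N' t' = lab N t"
    "\<forall>s. enat (pre N' t' s) \<le> origins N Tp Sp (Tr t) s"
    using visible_match t(1) by blast
  have "enabled N' M' (one t')" using t t' by (intro related_enables_match[OF rel]) simp_all
  then show ?thesis
    using related_start[OF rel t] st_start[of N' t' a M' U'] t(1) t'(2) p' by auto
qed

lemma related_started_visible:
  assumes "related (M, U) (M', U')" "x \<in> set U"
  shows "lab N x \<noteq> None"
proof -
  obtain i where "i < length U" "U ! i = x" using assms(2) by (auto simp: in_set_conv_nth)
  then show ?thesis using related_nth[OF assms(1)] visible_N' by metis
qed

lemma cond5_visible_zero:
  assumes H: "fin H" "lab_empty N H" and HMU: "fin HMU" "mset_over HMU Tp" "lab_empty N HMU"
    and c5: "cond5 M' U' U HMU H" and x: "lab N x = Some a"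
  shows "HMU x = 0" "H x = 0"
proof -
  have "\<And>y. 0 \<le> HMU y" using HMU(2) by (simp add: mset_over_def)
  note zero = lab_empty_dominated_visible_zero[OF H HMU(1,3) this cond5D(3)[OF c5] x]
  show "HMU x = 0" "H x = 0" by (fact zero)+
qed

lemma related_tau_steps_positive_part:
  assumes rel: "related (M, U) (M', U')" and H: "fin H" "M = lifted M' U' U H"
    and c5: "cond5 M' U' U HMU H" and vis: "\<And>x. lab N x \<noteq> None \<Longrightarrow> H x = 0"
  shows "tau_steps N (M, U) (lifted M' U' U (\<lambda>x. max (H x) 0), U)"
proof -
  define Hneg where "Hneg = (\<lambda>x. max (- H x) 0)"
  have fHneg: "fin Hneg" using H(1) by (rule fin_subset) (auto simp: supp_def Hneg_def)
  have M_nonneg: "\<forall>s. 0 \<le> M s" using rel by (simp add: related_def st_reachable_def mset_over_def)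
  have disj_U: "disjoint_ms (pre N u) (pre N x)" if "H u < 0" "x \<in> set U" for u x
  proof (rule cond5D(6)[OF c5 that(1)])
    show "lab N x \<noteq> None" using related_started_visible[OF rel that(2)] .
    have "x \<in> trans N" using rel that(2) by (auto simp: related_def st_reachable_def)
    moreover have "int (pre N x s) \<le> lifted M' U' U H s + pre_ms N (cnt U) s" for s
      using M_nonneg H(2) pre_ms_cnt_member[OF that(2), of N s] by (simp add: add_increasing)
    ultimately show "enabled N (\<lambda>s. lifted M' U' U H s + pre_ms N (cnt U) s) (one x)"
      by (simp add: enabled_one)
  qed
  have end_eq: "lifted M' U' U (\<lambda>x. max (H x) 0) = (\<lambda>s. M s + eff N Hneg s)"
  proof -
    have "(\<lambda>x. max (H x) 0) = (\<lambda>x. H x + Hneg x)" by (auto simp: Hneg_def max_def)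
    then show ?thesis using H fHneg by (simp add: lifted_add)
  qed
  have end_nonneg: "\<forall>s. 0 \<le> M s + eff N Hneg s"
  proof
    fix s
    have base_U: "0 \<le> lifted M' U' U (\<lambda>x. 0) s + pre_ms N (cnt U) s"
      using rel by (intro lifted_base_nonneg) (simp add: related_def st_reachable_def)
    have base_H: "0 \<le> lifted M' U' U (\<lambda>x. 0) s + eff N H s"
      using M_nonneg H(2) lifted_base[of M' U' U H s] by metis
    from eff_positive_part_nonneg[OF H(1) cond5D(5)[OF c5] disj_U base_U base_H]
    show "0 \<le> M s + eff N Hneg s" using end_eq lifted_base by metis
  qed
  have "H x < 0" if "x \<in> supp Hneg" for x
    using that by (auto simp: supp_def Hneg_def max_def split: if_splits)
  then have "supp Hneg \<subseteq> Tm" "\<forall>x\<in>supp Hneg. lab N x = None"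
    using cond5D(4)[OF c5] vis by fastforce+
  moreover have "\<forall>x. 0 \<le> Hneg x" by (simp add: Hneg_def)
  ultimately show ?thesis
    unfolding end_eq using tau_steps_fire_acyclic[OF wfN acyclic_Tm Tm_sub fHneg] M_nonneg end_nonneg
    by blast
qed

lemma tau_steps_lifted_compensation:
  assumes K: "fin K" "\<And>x. 0 \<le> K x" "\<And>x. K x \<le> HMU x"
    and HMU: "fin HMU" "mset_over HMU Tp" "\<And>x. lab N x \<noteq> None \<Longrightarrow> HMU x = 0"
    and nonneg: "\<forall>s. 0 \<le> lifted M' U' U K s" "\<forall>s. 0 \<le> lifted M' U' U HMU s"
  shows "tau_steps N (lifted M' U' U K, U) (lifted M' U' U HMU, U)"
proof -
  define R where "R = (\<lambda>x. HMU x - K x)"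
  have fR: "fin R" using HMU(1) K(1) by (simp add: R_def fin_diff)
  have "supp R \<subseteq> supp HMU"
  proof
    fix x assume "x \<in> supp R"
    then show "x \<in> supp HMU" using K(2)[of x] K(3)[of x] by (auto simp: R_def supp_def)
  qed
  then have "supp R \<subseteq> Tp" "\<forall>x\<in>supp R. lab N x = None"
    using HMU(2,3) by (auto simp: mset_over_def supp_def) fastforce
  moreover have "\<forall>x. 0 \<le> R x" using K(3) by (simp add: R_def)
  moreover have "lifted M' U' U HMU = (\<lambda>s. lifted M' U' U K s + eff N R s)"
    using lifted_add[OF K(1) fR, of M' U' U] by (simp add: R_def)
  ultimately show ?thesis
    using tau_steps_fire_acyclic[OF wfN acyclic_Tp Tp_sub fR] nonneg by simp
qed

lemma related_reaches_compensation:
  assumes rel: "related (M, U) (M', U')"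
  obtains M1 where "tau_steps N (M, U) (M1, U)" "related (M1, U) (M', U')"
    "\<forall>a. can_do N' M' (Some a) \<longrightarrow> can_do N M1 (Some a)"
proof -
  obtain H where H: "H \<in> NF" "fin H" "lab_empty N H" "M = lifted M' U' U H"
    by (rule related_normal_form[OF rel])
  obtain HMU where HMU: "fin HMU" "mset_over HMU Tp" "lab_empty N HMU"
    "\<forall>H \<in> NF. fin H \<longrightarrow> related (lifted M' U' U H, U) (M', U') \<longrightarrow> cond5 M' U' U HMU H"
    by (rule compensation_witness[OF rel])
  have c5: "cond5 M' U' U HMU H" using HMU(4) H rel by simp
  have vis: "H x = 0" "HMU x = 0" if "lab N x \<noteq> None" for x
    using that cond5_visible_zero[OF H(2,3) HMU(1-3) c5] by auto
  let ?Hpos = "\<lambda>x. max (H x) 0" and ?MMU = "lifted M' U' U HMU"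
  have steps1: "tau_steps N (M, U) (lifted M' U' U ?Hpos, U)"
    using vis(1) by (rule related_tau_steps_positive_part[OF rel H(2,4) c5])
  have "st_reachable N (lifted M' U' U ?Hpos, U)"
    using tau_steps_st_reachable[OF wfN steps1] rel by (simp add: related_def)
  then have "\<forall>s. 0 \<le> lifted M' U' U ?Hpos s" by (simp add: st_reachable_def mset_over_def)
  moreover have "\<forall>s. 0 \<le> ?MMU s" using cond5D(1)[OF c5] by (simp add: mset_over_def)
  moreover have "fin ?Hpos" using H(2) by (rule fin_subset) (auto simp: supp_def)
  ultimately have steps2: "tau_steps N (lifted M' U' U ?Hpos, U) (?MMU, U)"
    using cond5D(3)[OF c5] HMU(2) vis(2)
    by (intro tau_steps_lifted_compensation[OF _ _ _ HMU(1,2)]) (auto simp: mset_over_def)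
  have steps: "tau_steps N (M, U) (?MMU, U)" using steps1 steps2 by (rule rtranclp_trans)
  have "related (?MMU, U) (M', U')"
    using rel tau_steps_st_reachable[OF wfN steps] HMU(1-3) Tp_sub
    by (auto simp: related_def mset_over_def signed_over_def)
  moreover have "\<forall>a. can_do N' M' (Some a) \<longrightarrow> can_do N ?MMU (Some a)"
    using cond5D(2)[OF c5] by blast
  ultimately show ?thesis using that steps by blast
qed

lemma related_simulated_start:
  assumes rel: "related (M, U) (M', U')" and st: "st_step N' (M', U') (Start a) q'"
  shows "\<exists>p1 p'. tau_steps N (M, U) p1 \<and> related p1 (M', U') \<and> related p' q' \<and> st_step N p1 (Start a) p'"
proof -
  from st obtain t' where t': "lab N' t' = Some a" "enabled N' M' (one t')"
    and q': "q' = (\<lambda>s. M' s - int (pre N' t' s), U' @ [t'])"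
    by cases auto
  obtain M1 where M1: "tau_steps N (M, U) (M1, U)" "related (M1, U) (M', U')"
    "\<forall>a. can_do N' M' (Some a) \<longrightarrow> can_do N M1 (Some a)"
    by (rule related_reaches_compensation[OF rel])
  have "can_do N M1 (Some a)" using M1(3) t' by (auto simp: can_do_def)
  then obtain t where t: "lab N t = Some a" "enabled N M1 (one t)" by (auto simp: can_do_def)
  show ?thesis
    using M1(1,2) related_start[OF M1(2) t t'] st_start[OF t, of U] q' by blast
qed

lemma bb_half_N: "bb_half (st_step N) (st_step N') related"
  unfolding bb_half_def
proof (intro conjI allI impI; elim conjE)
  fix p q \<alpha> p'
  assume rel: "related p q" and st: "st_step N p \<alpha> p'"
  obtain M U M' U' where pq: "p = (M, U)" "q = (M', U')" by fastforce
  show "\<exists>q1 q'. (\<lambda>x y. st_step N' x Tau y)\<^sup>*\<^sup>* q q1 \<and> related p q1 \<and> related p' q' \<and>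
      (st_step N' q1 \<alpha> q' \<or> \<alpha> = Tau \<and> q' = q1)"
    using st[unfolded pq]
  proof cases
    case (st_start t a)
    then show ?thesis using related_simulates_start[OF rel[unfolded pq]] rel pq st by blast
  next
    case (st_fin n a)
    have "n < length U'" "lab N' (U' ! n) = Some a"
      using related_length[OF rel[unfolded pq]] related_nth(1)[OF rel[unfolded pq]] st_fin by auto
    then show ?thesis
      using st_step.st_fin[of n U' N' a M'] related_fin[OF rel[unfolded pq] st_fin(3)] pq st_fin(1,2)
        rel rtranclp.rtrancl_refl
      by blast
  next
    case st_tau
    then have "related p' q" using related_tau[OF rel] st by blast
    then show ?thesis using rel st_tau(1) rtranclp.rtrancl_refl by blast
  qed
next
  fix p q ps
  assume "related p q" "ps 0 = p" "\<forall>i. st_step N (ps i) Tau (ps (Suc i)) \<and> related (ps i) q"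
  then show "\<exists>qs. qs 0 = q \<and> (\<forall>i. st_step N' (qs i) Tau (qs (Suc i))) \<and> (\<forall>i j. related (ps i) (qs j))"
    using related_no_divergence[of ps "fst q" "snd q"] by simp
qed

lemma bb_half_N': "bb_half (st_step N') (st_step N) related\<inverse>\<inverse>"
  unfolding bb_half_def
proof (intro conjI allI impI; elim conjE)
  fix q p \<alpha> q'
  assume rel: "related\<inverse>\<inverse> q p" and st: "st_step N' q \<alpha> q'"
  obtain M U M' U' where pq: "p = (M, U)" "q = (M', U')" by fastforce
  have rel': "related (M, U) (M', U')" using rel pq by simp
  show "\<exists>p1 p'. (\<lambda>x y. st_step N x Tau y)\<^sup>*\<^sup>* p p1 \<and> related\<inverse>\<inverse> q p1 \<and> related\<inverse>\<inverse> q' p' \<and>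
      (st_step N p1 \<alpha> p' \<or> \<alpha> = Tau \<and> p' = p1)"
    using st[unfolded pq]
  proof cases
    case (st_start t a)
    then show ?thesis using related_simulated_start[OF rel'] pq st by fastforce
  next
    case (st_fin n a)
    have n: "n < length U" using related_length[OF rel'] st_fin(3) by simp
    have "lab N (U ! n) = Some a" using related_nth(1)[OF rel' n] st_fin(4) by simp
    then show ?thesis
      using st_step.st_fin[OF n, of N a M] related_fin[OF rel' n] rel' pq st_fin(1,2)
      by (auto intro: rtranclp.rtrancl_refl)
  next
    case st_tau
    then show ?thesis using no_tau_N' st by blast
  qed
next
  fix q p qs
  assume "qs 0 = q" "\<forall>i. st_step N' (qs i) Tau (qs (Suc i)) \<and> related\<inverse>\<inverse> (qs i) p"
  then show "\<exists>ps. ps 0 = p \<and> (\<forall>i. st_step N (ps i) Tau (ps (Suc i))) \<and> (\<forall>i j. related\<inverse>\<inverse> (qs i) (ps j))"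
    using no_tau_N' by blast
qed

lemma bSTb_div_equiv_N_N': "bSTb_div_equiv N N'"
  unfolding bSTb_div_equiv_def bbisim_div_def using related_init bb_half_N bb_half_N' by blast

end

theorem theorem6p8:
  fixes N :: "('s, 't, 'a) pnet" and N' :: "('s, 't2, 'a) pnet"
    and Tp Tm :: "'t set" and NF :: "('t \<Rightarrow> int) set"
  assumes wfN: "wf_net N" and wfN': "wf_net N'" and plainN': "plain N'"
    and S'_sub: "places N' \<subseteq> places N"
    and M0': "\<forall>s. init N' s = (if s \<in> places N' then init N s else 0)"
    and Tp_sub: "Tp \<subseteq> trans N" and Tm_sub: "Tm \<subseteq> trans N"
    and NF_sub: "\<forall>H \<in> NF. signed_over H (trans N)"
    and h1: "acyclic_on N Tp"
    and h2: "acyclic_on N Tm"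
    and h3: "\<forall>t \<in> trans N. lab N t \<noteq> None \<longrightarrow>
       (\<exists>t' \<in> trans N'. lab N' t' = lab N t \<and>
          (\<forall>s. enat (pre N' t' s) \<le>
                 origins N Tp (places N' \<union> {s \<in> places N. 0 < init N s}) (Tr t) s) \<and>
          (\<exists>G. fin G \<and> mset_over G (trans N) \<and> lab_empty N G \<and>
               eff N' (one t') = eff N (\<lambda>x. one t x + G x)))"
    and h4: "\<exists>f :: 't \<Rightarrow> nat. (\<forall>t \<in> trans N. 0 < f t) \<and>
       (\<forall>G. fin G \<and> signed_over G (trans N) \<and> lab_empty N G \<longrightarrow>
          (\<exists>H \<in> NF. fin H \<and> lab_empty N H \<and> eff N H = eff N G \<and>
             (\<Sum>t\<in>supp H. H t * int (f t)) = (\<Sum>t\<in>supp G. G t * int (f t))))"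
    and h5: "\<forall>M' U' U. mset_over M' (places N') \<and> mset_over U' (trans N') \<and> fin U' \<and>
       mset_over U (trans N) \<and> fin U \<and> labm N U = labm N' U' \<and>
       (\<lambda>s. M' s + pre_ms N' U' s) \<in> reach N' \<longrightarrow>
       (\<exists>HMU. fin HMU \<and> mset_over HMU Tp \<and> lab_empty N HMU \<and>
          (\<forall>H \<in> NF. fin H \<longrightarrow>
             (let M = (\<lambda>s. M' s + pre_ms N' U' s + (init_m N s - init_m N' s) + eff N H s - pre_ms N U s);
                  MMU = (\<lambda>s. M' s + pre_ms N' U' s + (init_m N s - init_m N' s) + eff N HMU s - pre_ms N U s);
                  MU = (\<lambda>s. M s + pre_ms N U s)
              in mset_over M (places N) \<and> MU \<in> reach N \<longrightarrow>
                 mset_over MMU (places N) \<and>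
                 (\<forall>a. can_do N' M' (Some a) \<longrightarrow> can_do N MMU (Some a)) \<and>
                 (\<forall>t. H t \<le> HMU t) \<and>
                 (\<forall>u. H u < 0 \<longrightarrow> u \<in> Tm) \<and>
                 (\<forall>u t. H u < 0 \<and> 0 < H t \<longrightarrow> disjoint_ms (pre N u) (pre N t)) \<and>
                 (\<forall>u t. H u < 0 \<and> enabled N MU (one t) \<and> lab N t \<noteq> None \<longrightarrow>
                    disjoint_ms (pre N u) (pre N t)) \<and>
                 (\<forall>t u t' u'. enabled N MU (\<lambda>x. one t x + one u x) \<and>
                    t' \<in> trans N' \<and> u' \<in> trans N' \<and> lab N' t' = lab N t \<and> lab N' u' = lab N u \<longrightarrow>
                    disjoint_ms (pre N' t') (pre N' u')))))"
  shows "bSTb_div_equiv N N'"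
proof -
  obtain f :: "'t \<Rightarrow> nat" where f: "\<forall>t \<in> trans N. 0 < f t"
    "\<forall>G. fin G \<and> signed_over G (trans N) \<and> lab_empty N G \<longrightarrow>
       (\<exists>H \<in> NF. fin H \<and> lab_empty N H \<and> eff N H = eff N G \<and>
          (\<Sum>t\<in>supp H. H t * int (f t)) = (\<Sum>t\<in>supp G. G t * int (f t)))"
    using h4 by blast
  interpret implementation_setting N N' Tp Tm NF f
    by (rule implementation_setting.intro[OF wfN wfN' plainN' M0' Tp_sub Tm_sub h1 h2 h3 f h5])
  show ?thesis by (rule bSTb_div_equiv_N_N')
qed

end
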